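(* Let $W^{(1)}$ be a pro-$p$ Coxeter group, $\mathcal O$ its set of orientations, and $\mathfrak A(W^{(1)})$ the group with generators $\{T_w\}_{w\in W^{(1)}}$ and relations $T_{ww'}=T_wT_{w'}$ whenever $\ell(ww')=\ell(w)+\ell(w')$ (notation as in the context). Then there exists a unique map \[ \theta:W^{(1)}\longrightarrow \mathrm{Hom}_{\mathrm{Set}}(\mathcal O,\mathfrak A(W^{(1)})),\qquad w\mapsto(\mathfrak o\mapsto\theta_{\mathfrak o}(w)) \] such that $\theta_{\mathfrak o}(ww')=\theta_{\mathfrak o}(w)\,\theta_{\mathfrak o\bullet w}(w')$ for all $w,w'\in W^{(1)}$ and $\mathfrak o\in\mathcal O$; $\theta_{\mathfrak o}(n_s)=T_{n_s^{\varepsilon}}^{\varepsilon}$ with $\varepsilon=\mathfrak o(1,s)\in\{\pm1\}$ for all $s\in S$ and $\mathfrak o\in\mathcal O$ (i.e. $\theta_{\mathfrak o}(n_s)=T_{n_s}$ if $\varepsilon=1$ and $=T_{n_s^{-1}}^{-1}$ if $\varepsilon=-1$); and $\theta_{\mathfrak o}(u)=T_u$ for all $u\in\Omega^{(1)}$ and $\mathfrak o\in\mathcal O$.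
   Context: Coxeter group $(W_{\mathrm{aff}},S)$ with length $\ell$ and $m(s,t)$ the order of $st$. Extended Coxeter group: $W=W_{\mathrm{aff}}\rtimes\Omega$ with $(W_{\mathrm{aff}},S)$ Coxeter and $\Omega$ preserving $S$ under conjugation; $\ell(wu)=\ell(w)$ for $w\in W_{\mathrm{aff}}$, $u\in\Omega$. Pro-$p$ Coxeter group: extension $1\to T\to W^{(1)}\xrightarrow{\pi}W\to1$, $T$ abelian, with lifts $n_s\in\pi^{-1}(s)$ satisfying the braid relations $n_sn_tn_s\cdots=n_tn_sn_t\cdots$ ($m(s,t)$ factors) when $m(s,t)<\infty$; $\ell$ on $W^{(1)}$ is $\ell\circ\pi$; $\Omega^{(1)}=\pi^{-1}(\Omega)$. Orientations: an orientation of $(W_{\mathrm{aff}},S)$ is a map $\mathfrak o:W_{\mathrm{aff}}\times S\to\{\pm1\}$ with (OR1) $\mathfrak o(ws,s)=-\mathfrak o(w,s)$ and (OR2) for $s,t\in S$ with $m=m(s,t)<\infty$ and $w\in W_{\mathrm{aff}}$, the sequences $(\mathfrak o(w,s),\mathfrak o(ws,t),\mathfrak o(wst,s),\dots)$ and $(\mathfrak o(w,t),\mathfrak o(wt,s),\dots)$ of length $m$ are, for some $0\le k\le m$, either ($k$ pluses then $m-k$ minuses) and ($m-k$ minuses then $k$ pluses), or ($k$ minuses then $m-k$ pluses) and ($m-k$ pluses then $k$ minuses). An orientation of $W$ is a map $W\times S\to\{\pm1\}$ of the form $(wu,s)\mapsto\mathfrak o(w,usu^{-1})$ ($w\in W_{\mathrm{aff}},u\in\Omega$)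 with $\mathfrak o$ an orientation of $W_{\mathrm{aff}}$; an orientation of $W^{(1)}$ is a map $(w,s)\mapsto\mathfrak o(\pi(w),s)$ with $\mathfrak o$ an orientation of $W$. $\mathcal O$ is the set of orientations of $W^{(1)}$, with right $W^{(1)}$-action $(\mathfrak o\bullet w)(w',s)=\mathfrak o(ww',s)$. *)

theory Defs
  imports "HOL-Algebra.Algebra"
begin

definition word_prod :: "('a, 'b) monoid_scheme \<Rightarrow> 'a list \<Rightarrow> 'a" where
  "word_prod G ws = foldr (\<lambda>x y. x \<otimes>\<^bsub>G\<^esub> y) ws \<one>\<^bsub>G\<^esub>"

fun alt_prod :: "('a, 'b) monoid_scheme \<Rightarrow> 'a \<Rightarrow> 'a \<Rightarrow> nat \<Rightarrow> 'a" where
  "alt_prod G a b 0 = \<one>\<^bsub>G\<^esub>"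
| "alt_prod G a b (Suc k) = a \<otimes>\<^bsub>G\<^esub> alt_prod G b a k"

text \<open>m(s,t): the order of st (0 encodes infinite order).\<close>
definition cox_m :: "('a, 'b) monoid_scheme \<Rightarrow> 'a \<Rightarrow> 'a \<Rightarrow> nat" where
  "cox_m W s t = group.ord W (s \<otimes>\<^bsub>W\<^esub> t)"

text \<open>The congruence on words in S generated by the Coxeter relators (st)^{m(s,t)}
  for m(s,t) finite (including s = t, giving s^2 = 1).\<close>
inductive cox_equiv :: "('a, 'b) monoid_scheme \<Rightarrow> 'a set \<Rightarrow> 'a list \<Rightarrow> 'a list \<Rightarrow> bool"
  for W S where
  cox_refl: "xs \<in> lists S \<Longrightarrow> cox_equiv W S xs xs"
| cox_sym: "cox_equiv W S xs ys \<Longrightarrow> cox_equiv W S ys xs"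
| cox_trans: "cox_equiv W S xs ys \<Longrightarrow> cox_equiv W S ys zs \<Longrightarrow> cox_equiv W S xs zs"
| cox_rel: "u \<in> lists S \<Longrightarrow> v \<in> lists S \<Longrightarrow> s \<in> S \<Longrightarrow> t \<in> S \<Longrightarrow> cox_m W s t \<noteq> 0 \<Longrightarrow>
     cox_equiv W S (u @ concat (replicate (cox_m W s t) [s, t]) @ v) (u @ v)"

text \<open>(Waff, S) is a Coxeter system inside the group W: S is a set of involutions
  generating the subgroup Waff, and Waff has the presentation
  < S | (st)^{m(s,t)} = 1 (m(s,t) < \<infinity>) >, i.e. two words in S have the same
  product iff they are equivalent under the Coxeter relations.\<close>
definition coxeter_system :: "('a, 'b) monoid_scheme \<Rightarrow> 'a set \<Rightarrow> 'a set \<Rightarrow> bool" where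
  "coxeter_system W Waff S \<longleftrightarrow>
     group W \<and> subgroup Waff W \<and> S \<subseteq> Waff \<and>
     (\<forall>s\<in>S. s \<noteq> \<one>\<^bsub>W\<^esub> \<and> s \<otimes>\<^bsub>W\<^esub> s = \<one>\<^bsub>W\<^esub>) \<and>
     Waff = word_prod W ` lists S \<and>
     (\<forall>u\<in>lists S. \<forall>v\<in>lists S. word_prod W u = word_prod W v \<longrightarrow> cox_equiv W S u v)"

definition ext_coxeter :: "('a, 'b) monoid_scheme \<Rightarrow> 'a set \<Rightarrow> 'a set \<Rightarrow> 'a set \<Rightarrow> bool" where
  "ext_coxeter W Waff S Omega \<longleftrightarrow>
     coxeter_system W Waff S \<and> Waff \<lhd> W \<and> subgroup Omega W \<and>
     Waff \<inter> Omega = {\<one>\<^bsub>W\<^esub>} \<and> Waff <#>\<^bsub>W\<^esub> Omega = carrier W \<and>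
     (\<forall>u\<in>Omega. \<forall>s\<in>S. u \<otimes>\<^bsub>W\<^esub> s \<otimes>\<^bsub>W\<^esub> inv\<^bsub>W\<^esub> u \<in> S)"

definition ext_length :: "('a, 'b) monoid_scheme \<Rightarrow> 'a set \<Rightarrow> 'a set \<Rightarrow> 'a \<Rightarrow> nat" where
  "ext_length W S Omega x =
     (LEAST n. \<exists>ws\<in>lists S. length ws = n \<and> (\<exists>u\<in>Omega. x = word_prod W ws \<otimes>\<^bsub>W\<^esub> u))"

definition pro_p_coxeter ::
  "('g, 'c) monoid_scheme \<Rightarrow> ('w, 'd) monoid_scheme \<Rightarrow> 'w set \<Rightarrow> 'w set \<Rightarrow> 'w set
     \<Rightarrow> ('g \<Rightarrow> 'w) \<Rightarrow> ('w \<Rightarrow> 'g) \<Rightarrow> bool" where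
  "pro_p_coxeter G W Waff S Omega prj n \<longleftrightarrow>
     group G \<and> ext_coxeter W Waff S Omega \<and>
     prj \<in> hom G W \<and> prj ` carrier G = carrier W \<and>
     (\<forall>a\<in>carrier G. \<forall>b\<in>carrier G. prj a = \<one>\<^bsub>W\<^esub> \<longrightarrow> prj b = \<one>\<^bsub>W\<^esub> \<longrightarrow>
        a \<otimes>\<^bsub>G\<^esub> b = b \<otimes>\<^bsub>G\<^esub> a) \<and>
     (\<forall>s\<in>S. n s \<in> carrier G \<and> prj (n s) = s) \<and>
     (\<forall>s\<in>S. \<forall>t\<in>S. cox_m W s t \<noteq> 0 \<longrightarrow>
        alt_prod G (n s) (n t) (cox_m W s t) = alt_prod G (n t) (n s) (cox_m W s t))"

definition pro_length ::
  "('w, 'd) monoid_scheme \<Rightarrow> 'w set \<Rightarrow> 'w set \<Rightarrow> ('g \<Rightarrow> 'w) \<Rightarrow> 'g \<Rightarrow> nat" where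
  "pro_length W S Omega prj g = ext_length W S Omega (prj g)"

definition sign :: "bool \<Rightarrow> int" where "sign b = (if b then 1 else -1)"

definition orientation_aff :: "('a, 'b) monoid_scheme \<Rightarrow> 'a set \<Rightarrow> 'a set \<Rightarrow> ('a \<Rightarrow> 'a \<Rightarrow> int) \<Rightarrow> bool" where
  "orientation_aff W Waff S ori \<longleftrightarrow>
     (\<forall>w\<in>Waff. \<forall>s\<in>S. ori w s \<in> {1, -1}) \<and>
     (\<forall>w\<in>Waff. \<forall>s\<in>S. ori (w \<otimes>\<^bsub>W\<^esub> s) s = - ori w s) \<and>
     (\<forall>w\<in>Waff. \<forall>s\<in>S. \<forall>t\<in>S. cox_m W s t \<noteq> 0 \<longrightarrow>
        (let m = cox_m W s t;
             seq1 = (\<lambda>i. ori (w \<otimes>\<^bsub>W\<^esub> alt_prod W s t i) (if even i then s else t));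
             seq2 = (\<lambda>i. ori (w \<otimes>\<^bsub>W\<^esub> alt_prod W t s i) (if even i then t else s))
         in \<exists>k\<le>m.
             ((\<forall>i<m. seq1 i = sign (i < k)) \<and> (\<forall>i<m. seq2 i = - sign (i < m - k))) \<or>
             ((\<forall>i<m. seq1 i = - sign (i < k)) \<and> (\<forall>i<m. seq2 i = sign (i < m - k)))))"

definition orientation_ext ::
  "('a, 'b) monoid_scheme \<Rightarrow> 'a set \<Rightarrow> 'a set \<Rightarrow> 'a set \<Rightarrow> ('a \<Rightarrow> 'a \<Rightarrow> int) \<Rightarrow> bool" where
  "orientation_ext W Waff S Omega Or \<longleftrightarrow>
     (\<exists>ori. orientation_aff W Waff S ori \<and>
        (\<forall>w\<in>Waff. \<forall>u\<in>Omega. \<forall>s\<in>S.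
           Or (w \<otimes>\<^bsub>W\<^esub> u) s = ori w (u \<otimes>\<^bsub>W\<^esub> s \<otimes>\<^bsub>W\<^esub> inv\<^bsub>W\<^esub> u)))"

text \<open>The set of orientations of W^(1), as maps on carrier G \<times> S
  (extensional: undefined outside carrier G \<times> S).\<close>
definition pro_orientations ::
  "('g, 'c) monoid_scheme \<Rightarrow> ('w, 'd) monoid_scheme \<Rightarrow> 'w set \<Rightarrow> 'w set \<Rightarrow> 'w set
     \<Rightarrow> ('g \<Rightarrow> 'w) \<Rightarrow> ('g \<Rightarrow> 'w \<Rightarrow> int) set" where
  "pro_orientations G W Waff S Omega prj =
     {(\<lambda>g s. if g \<in> carrier G \<and> s \<in> S then Or (prj g) s else undefined) | Or.
        orientation_ext W Waff S Omega Or}"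

definition orient_act :: "('g, 'c) monoid_scheme \<Rightarrow> 'w set \<Rightarrow> ('g \<Rightarrow> 'w \<Rightarrow> int) \<Rightarrow> 'g \<Rightarrow> ('g \<Rightarrow> 'w \<Rightarrow> int)" where
  "orient_act G S Or w = (\<lambda>w' s. if w' \<in> carrier G \<and> s \<in> S then Or (w \<otimes>\<^bsub>G\<^esub> w') s else undefined)"

text \<open>Words in the generators T_w^{\<plusminus>1}: (w, True) stands for T_w, (w, False) for T_w^{-1}.\<close>
inductive A_equiv :: "('g, 'c) monoid_scheme \<Rightarrow> ('g \<Rightarrow> nat) \<Rightarrow> ('g \<times> bool) list \<Rightarrow> ('g \<times> bool) list \<Rightarrow> bool"
  for G len where
  A_refl: "xs \<in> lists (carrier G \<times> UNIV) \<Longrightarrow> A_equiv G len xs xs"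
| A_sym: "A_equiv G len xs ys \<Longrightarrow> A_equiv G len ys xs"
| A_trans: "A_equiv G len xs ys \<Longrightarrow> A_equiv G len ys zs \<Longrightarrow> A_equiv G len xs zs"
| A_cancel: "u \<in> lists (carrier G \<times> UNIV) \<Longrightarrow> v \<in> lists (carrier G \<times> UNIV) \<Longrightarrow> x \<in> carrier G \<Longrightarrow>
     A_equiv G len (u @ [(x, b), (x, \<not> b)] @ v) (u @ v)"
| A_braid: "u \<in> lists (carrier G \<times> UNIV) \<Longrightarrow> v \<in> lists (carrier G \<times> UNIV) \<Longrightarrow>
     x \<in> carrier G \<Longrightarrow> y \<in> carrier G \<Longrightarrow> len (x \<otimes>\<^bsub>G\<^esub> y) = len x + len y \<Longrightarrow>
     A_equiv G len (u @ [(x \<otimes>\<^bsub>G\<^esub> y, True)] @ v) (u @ [(x, True), (y, True)] @ v)"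

definition A_rel :: "('g, 'c) monoid_scheme \<Rightarrow> ('g \<Rightarrow> nat) \<Rightarrow> (('g \<times> bool) list \<times> ('g \<times> bool) list) set" where
  "A_rel G len = {(xs, ys). A_equiv G len xs ys}"

definition A_mult :: "('g, 'c) monoid_scheme \<Rightarrow> ('g \<Rightarrow> nat) \<Rightarrow> ('g \<times> bool) list set \<Rightarrow> ('g \<times> bool) list set \<Rightarrow> ('g \<times> bool) list set" where
  "A_mult G len P Q = A_rel G len `` {zs. \<exists>xs\<in>P. \<exists>ys\<in>Q. zs = xs @ ys}"

definition A_group :: "('g, 'c) monoid_scheme \<Rightarrow> ('g \<Rightarrow> nat) \<Rightarrow> ('g \<times> bool) list set monoid" where
  "A_group G len =
     \<lparr> carrier = lists (carrier G \<times> UNIV) // A_rel G len,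
       monoid.mult = A_mult G len,
       one = A_rel G len `` {[]} \<rparr>"

definition A_gen :: "('g, 'c) monoid_scheme \<Rightarrow> ('g \<Rightarrow> nat) \<Rightarrow> 'g \<Rightarrow> ('g \<times> bool) list set" where
  "A_gen G len w = A_rel G len `` {[(w, True)]}"

end

theory Submission
  imports Defs
begin

(* Every element of W^(1) factors as n_{s_1} ... n_{s_k} v with prj v in Omega, so the cocycle rule
   forces theta_o(n_{s_1} ... n_{s_k} v) = T_{n_{s_1}}^{e_1} ... T_{n_{s_k}}^{e_k} T_v, where e_i is the
   value of o at the prefix n_{s_1} ... n_{s_{i-1}} against s_i; this formula is taken as the
   definition. It does not depend on the factorisation: two words with the same image in W_aff differ
   by Coxeter relations, and along a relator (st)^m the orientation has sign pattern e^k (-e)^m e^(m-k)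
   by (OR2). Since alternating words of length at most m(s,t) are reduced, the relations
   T_{ww'} = T_w T_{w'} collapse the corresponding product to T_tau, where tau in T lifts the relator,
   and T_tau commutes past the remaining factors up to conjugation. Multiplicativity holds because
   conjugation by Omega permutes S compatibly with orientations. *)

section \<open>The group \<AA>\<close>

lemma A_equiv_lists:
  assumes "group G" and "A_equiv G len xs ys"
  shows "xs \<in> lists (carrier G \<times> UNIV) \<and> ys \<in> lists (carrier G \<times> UNIV)"
  using assms(2) by induct (auto intro: monoid.m_closed[OF group.is_monoid[OF assms(1)]])

lemma A_equiv_append_left:
  assumes "A_equiv G len xs ys" "zs \<in> lists (carrier G \<times> UNIV)"
  shows "A_equiv G len (zs @ xs) (zs @ ys)"
  using assms
proof induct
  case (A_cancel u v x b)
  then show ?case using A_equiv.A_cancel[of "zs @ u" G v x len b] by simp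
next
  case (A_braid u v x y)
  then show ?case using A_equiv.A_braid[of "zs @ u" G v x y len] by simp
next
  case (A_refl xs) then show ?case by (intro A_equiv.A_refl) auto
qed (auto intro: A_equiv.intros)

lemma A_equiv_append_right:
  assumes "A_equiv G len xs ys" "zs \<in> lists (carrier G \<times> UNIV)"
  shows "A_equiv G len (xs @ zs) (ys @ zs)"
  using assms
proof induct
  case (A_cancel u v x b)
  then show ?case using A_equiv.A_cancel[of u G "v @ zs" x len b] by simp
next
  case (A_braid u v x y)
  then show ?case using A_equiv.A_braid[of u G "v @ zs" x y len] by simp
next
  case (A_refl xs) then show ?case by (intro A_equiv.A_refl) auto
qed (auto intro: A_equiv.intros)

definition inverse_word :: "('g \<times> bool) list \<Rightarrow> ('g \<times> bool) list" where
  "inverse_word xs = rev (map (\<lambda>(x, b). (x, \<not> b)) xs)"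

lemma (in group) inv_cancel_left:
  "x \<in> carrier G \<Longrightarrow> y \<in> carrier G \<Longrightarrow> x \<otimes> (inv x \<otimes> y) = y"
  "x \<in> carrier G \<Longrightarrow> y \<in> carrier G \<Longrightarrow> inv x \<otimes> (x \<otimes> y) = y"
  by (simp_all add: m_assoc[symmetric])

context group
begin

abbreviation "A_words \<equiv> lists (carrier G \<times> (UNIV :: bool set))"

lemma A_equiv_append:
  assumes "A_equiv G len xs ys" "A_equiv G len xs' ys'"
  shows "A_equiv G len (xs @ xs') (ys @ ys')"
proof -
  have "xs' \<in> A_words" "ys \<in> A_words"
    using A_equiv_lists[OF group_axioms] assms by blast+
  then show ?thesis
    using A_equiv_append_right[OF assms(1)] A_equiv_append_left[OF assms(2)]
    by (blast intro: A_equiv.A_trans)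
qed

lemma equiv_A_rel: "equiv A_words (A_rel G len)"
proof -
  have "refl_on A_words (A_rel G len)"
    unfolding refl_on_def A_rel_def using A_equiv_lists[OF group_axioms]
    by (auto simp del: in_lists_conv_set intro: A_equiv.intros)
  moreover have "sym (A_rel G len)" "trans (A_rel G len)"
    unfolding sym_def trans_def A_rel_def by (auto intro: A_equiv.intros)
  moreover have "A_rel G len \<subseteq> A_words \<times> A_words"
    using A_equiv_lists[OF group_axioms] unfolding A_rel_def by blast
  ultimately show ?thesis by (simp add: equiv_def)
qed

lemma A_class_eq: "A_equiv G len xs ys \<Longrightarrow> A_rel G len `` {xs} = A_rel G len `` {ys}"
  by (rule equiv_class_eq[OF equiv_A_rel]) (simp add: A_rel_def)

lemma A_mult_class:
  assumes "xs \<in> A_words" "ys \<in> A_words"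
  shows "A_mult G len (A_rel G len `` {xs}) (A_rel G len `` {ys}) = A_rel G len `` {xs @ ys}"
proof -
  let ?R = "A_rel G len"
  let ?P = "{zs. \<exists>xs'\<in>?R `` {xs}. \<exists>ys'\<in>?R `` {ys}. zs = xs' @ ys'}"
  have "xs @ ys \<in> ?P"
    using assms by (auto simp: A_rel_def simp del: in_lists_conv_set intro!: A_equiv.A_refl)
  moreover have "?R `` ?P \<subseteq> ?R `` {xs @ ys}"
  proof
    fix z assume "z \<in> ?R `` ?P"
    then obtain xs' ys' where "(xs, xs') \<in> ?R" "(ys, ys') \<in> ?R" "(xs' @ ys', z) \<in> ?R"
      by auto
    then show "z \<in> ?R `` {xs @ ys}"
      by (auto simp: A_rel_def intro: A_equiv.A_trans A_equiv_append)
  qed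
  ultimately show ?thesis unfolding A_mult_def by blast
qed

lemma inverse_word_in_A_words: "xs \<in> A_words \<Longrightarrow> inverse_word xs \<in> A_words"
  by (auto simp: inverse_word_def)

lemma inverse_word_cancel: "xs \<in> A_words \<Longrightarrow> A_equiv G len (inverse_word xs @ xs) []"
proof (induct xs)
  case Nil then show ?case by (simp add: inverse_word_def A_equiv.A_refl)
next
  case (Cons a xs)
  obtain x b where a: "a = (x, b)" by force
  have x: "x \<in> carrier G" and xs: "xs \<in> A_words" using Cons a by auto
  have "inverse_word (a # xs) @ a # xs = inverse_word xs @ [(x, \<not> b), (x, \<not> \<not> b)] @ xs"
    by (simp add: inverse_word_def a)
  moreover have "A_equiv G len (inverse_word xs @ [(x, \<not> b), (x, \<not> \<not> b)] @ xs) (inverse_word xs @ xs)"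
    by (rule A_equiv.A_cancel) (use x xs inverse_word_in_A_words in auto)
  ultimately show ?case using Cons xs by (metis A_equiv.A_trans)
qed

lemma group_A_group: "group (A_group G len)"
proof (rule groupI)
  let ?A = "A_group G len"
  let ?R = "A_rel G len"
  have carr: "carrier ?A = A_words // ?R" by (simp add: A_group_def)
  have mul: "\<And>P Q. P \<otimes>\<^bsub>?A\<^esub> Q = A_mult G len P Q" by (simp add: A_group_def)
  have one: "\<one>\<^bsub>?A\<^esub> = ?R `` {[]}" by (simp add: A_group_def)
  show "\<And>x y. x \<in> carrier ?A \<Longrightarrow> y \<in> carrier ?A \<Longrightarrow> x \<otimes>\<^bsub>?A\<^esub> y \<in> carrier ?A"
    unfolding carr mul
  proof -
    fix x y assume "x \<in> A_words // ?R" "y \<in> A_words // ?R"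
    then obtain xs ys where "xs \<in> A_words" "ys \<in> A_words" "x = ?R `` {xs}" "y = ?R `` {ys}"
      by (auto elim!: quotientE simp del: in_lists_conv_set)
    then show "A_mult G len x y \<in> A_words // ?R"
      by (simp only: A_mult_class) (rule quotientI, simp)
  qed
  show "\<one>\<^bsub>?A\<^esub> \<in> carrier ?A" unfolding carr one by (auto intro!: quotientI)
  show "\<And>x y z. x \<in> carrier ?A \<Longrightarrow> y \<in> carrier ?A \<Longrightarrow> z \<in> carrier ?A \<Longrightarrow>
      x \<otimes>\<^bsub>?A\<^esub> y \<otimes>\<^bsub>?A\<^esub> z = x \<otimes>\<^bsub>?A\<^esub> (y \<otimes>\<^bsub>?A\<^esub> z)"
    unfolding carr mul
  proof -
    fix x y z assume "x \<in> A_words // ?R" "y \<in> A_words // ?R" "z \<in> A_words // ?R"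
    then obtain xs ys zs where "xs \<in> A_words" "ys \<in> A_words" "zs \<in> A_words" "x = ?R `` {xs}" "y = ?R `` {ys}" "z = ?R `` {zs}"
      by (auto elim!: quotientE simp del: in_lists_conv_set)
    then show "A_mult G len (A_mult G len x y) z = A_mult G len x (A_mult G len y z)"
      by (simp only: A_mult_class append_in_lists_conv append_assoc simp_thms)
  qed
  show "\<And>x. x \<in> carrier ?A \<Longrightarrow> \<one>\<^bsub>?A\<^esub> \<otimes>\<^bsub>?A\<^esub> x = x"
    unfolding carr mul one by (auto elim!: quotientE simp: A_mult_class[unfolded in_lists_conv_set])
  show "\<And>x. x \<in> carrier ?A \<Longrightarrow> \<exists>y\<in>carrier ?A. y \<otimes>\<^bsub>?A\<^esub> x = \<one>\<^bsub>?A\<^esub>"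
  proof -
    fix x assume "x \<in> carrier ?A"
    then obtain xs where xs: "xs \<in> A_words" "x = ?R `` {xs}" unfolding carr by (auto elim!: quotientE)
    show "\<exists>y\<in>carrier ?A. y \<otimes>\<^bsub>?A\<^esub> x = \<one>\<^bsub>?A\<^esub>"
    proof (intro bexI)
      show "?R `` {inverse_word xs} \<otimes>\<^bsub>?A\<^esub> x = \<one>\<^bsub>?A\<^esub>"
        unfolding mul one xs(2) using xs(1) inverse_word_in_A_words inverse_word_cancel A_class_eq
        by (simp add: A_mult_class)
      show "?R `` {inverse_word xs} \<in> carrier ?A"
        unfolding carr using xs(1) inverse_word_in_A_words by (auto intro!: quotientI)
    qed
  qed
qed

lemma A_gen_closed: "x \<in> carrier G \<Longrightarrow> A_gen G len x \<in> carrier (A_group G len)"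
  by (auto simp: A_gen_def A_group_def intro!: quotientI)

lemma A_gen_mult:
  assumes "x \<in> carrier G" "y \<in> carrier G" "len (x \<otimes> y) = len x + len y"
  shows "A_gen G len x \<otimes>\<^bsub>A_group G len\<^esub> A_gen G len y = A_gen G len (x \<otimes> y)"
proof -
  have "A_gen G len x \<otimes>\<^bsub>A_group G len\<^esub> A_gen G len y = A_rel G len `` {[(x, True), (y, True)]}"
    using assms by (simp add: A_gen_def A_group_def A_mult_class)
  also have "\<dots> = A_gen G len (x \<otimes> y)"
    unfolding A_gen_def using A_equiv.A_braid[of "[]" G "[]" x y len] assms
    by (intro A_class_eq) (rule A_equiv.A_sym, simp)
  finally show ?thesis .
qed

end

section \<open>Alternating words\<close>

fun alt_list :: "'a \<Rightarrow> 'a \<Rightarrow> nat \<Rightarrow> 'a list" where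
  "alt_list x y 0 = []"
| "alt_list x y (Suc k) = x # alt_list y x k"

definition alt_letter :: "'a \<Rightarrow> 'a \<Rightarrow> nat \<Rightarrow> 'a" where
  "alt_letter s t i = (if even i then s else t)"

lemma length_alt_list [simp]: "length (alt_list x y k) = k"
  by (induct k arbitrary: x y) auto

lemma alt_list_in_lists: "x \<in> A \<Longrightarrow> y \<in> A \<Longrightarrow> alt_list x y k \<in> lists A"
  by (induct k arbitrary: x y) auto

lemma concat_replicate_pair: "concat (replicate m [s, t]) = alt_list s t (2 * m)"
  by (induct m) auto

lemma alt_letter_Suc_Suc [simp]: "alt_letter s t (Suc (Suc i)) = alt_letter s t i"
  by (simp add: alt_letter_def)

lemma alt_letter_in_lists: "s \<in> A \<Longrightarrow> t \<in> A \<Longrightarrow> map (alt_letter s t) xs \<in> lists A"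
  by (auto simp: alt_letter_def)

lemma map_alt_letter_upt:
  "map (alt_letter s t) [a..<a + j] = alt_list (alt_letter s t a) (alt_letter s t (Suc a)) j"
proof (induct j arbitrary: a)
  case (Suc j)
  have "[a..<a + Suc j] = a # [Suc a..<Suc a + j]" by (simp add: upt_conv_Cons)
  then show ?case using Suc[of "Suc a"] by simp
qed simp

lemma alt_list_eq_map_alt_letter: "alt_list s t k = map (alt_letter s t) [0..<k]"
  using map_alt_letter_upt[of s t 0 k] by (simp add: alt_letter_def)

lemma take_alt_list: "i \<le> k \<Longrightarrow> take i (alt_list x y k) = alt_list x y i"
  by (simp add: alt_list_eq_map_alt_letter take_map)

lemma nth_alt_list: "i < k \<Longrightarrow> alt_list s t k ! i = alt_letter s t i"
  by (simp add: alt_list_eq_map_alt_letter)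

lemma alt_letter_reflect: "j < m \<Longrightarrow> alt_letter s t (m + j) = alt_letter t s (m - Suc j)"
proof -
  assume "j < m"
  then obtain d where "m = Suc (j + d)" using less_imp_Suc_add by blast
  then have "m + j = Suc (d + 2 * j)" "m - Suc j = d" by simp_all
  then show ?thesis by (simp add: alt_letter_def)
qed

lemma upt_split_window:
  assumes "k \<le> m"
  shows "[0..<2 * m] = [0..<0 + k] @ [k..<k + m] @ [k + m..<k + m + (m - k)]"
proof -
  have "[0..<k + (m + (m - k))] = [0..<0 + k] @ [k..<k + m] @ [k + m..<k + m + (m - k)]"
    using upt_add_eq_append[of 0 k "m + (m - k)"] upt_add_eq_append[of k "k + m" "m - k"]
    by (simp add: add.assoc)
  moreover have "k + (m + (m - k)) = 2 * m" using assms by simp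
  ultimately show ?thesis by (simp add: mult_2)
qed

lemma map_alt_list: "map f (alt_list x y k) = alt_list (f x) (f y) k"
  by (induct k arbitrary: x y) auto

definition conjugate :: "('a, 'b) monoid_scheme \<Rightarrow> 'a \<Rightarrow> 'a \<Rightarrow> 'a" where
  "conjugate G u x = u \<otimes>\<^bsub>G\<^esub> x \<otimes>\<^bsub>G\<^esub> inv\<^bsub>G\<^esub> u"

context group
begin

lemma word_prod_Nil [simp]: "word_prod G [] = \<one>"
  by (simp add: word_prod_def)

lemma word_prod_Cons: "word_prod G (x # ws) = x \<otimes> word_prod G ws"
  by (simp add: word_prod_def)

lemma word_prod_closed: "ws \<in> lists (carrier G) \<Longrightarrow> word_prod G ws \<in> carrier G"
  by (induct ws) (auto simp: word_prod_Cons)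

lemma word_prod_append:
  "ws \<in> lists (carrier G) \<Longrightarrow> vs \<in> lists (carrier G) \<Longrightarrow>
   word_prod G (ws @ vs) = word_prod G ws \<otimes> word_prod G vs"
  by (induct ws) (auto simp: word_prod_Cons word_prod_closed m_assoc)

lemma word_prod_window:
  assumes "k \<le> m" and F: "\<And>e i. F e i \<in> carrier G"
  shows "word_prod G (map (\<lambda>i. F (if k \<le> i \<and> i < k + m then f else e) i) [0..<2 * m])
    = word_prod G (map (F e) [0..<0 + k]) \<otimes>
      (word_prod G (map (F f) [k..<k + m]) \<otimes> word_prod G (map (F e) [k + m..<k + m + (m - k)]))"
proof -
  have "map (\<lambda>i. F (if k \<le> i \<and> i < k + m then f else e) i) [0..<0 + k] = map (F e) [0..<0 + k]"
    "map (\<lambda>i. F (if k \<le> i \<and> i < k + m then f else e) i) [k..<k + m] = map (F f) [k..<k + m]"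
    "map (\<lambda>i. F (if k \<le> i \<and> i < k + m then f else e) i) [k + m..<k + m + (m - k)]
      = map (F e) [k + m..<k + m + (m - k)]"
    by (auto intro!: map_cong)
  moreover have "map (F e) xs \<in> lists (carrier G)" for e xs using F by auto
  ultimately show ?thesis
    by (simp only: upt_split_window[OF assms(1)] map_append word_prod_append append_in_lists_conv)
qed

lemma conjugate_closed: "u \<in> carrier G \<Longrightarrow> x \<in> carrier G \<Longrightarrow> conjugate G u x \<in> carrier G"
  by (simp add: conjugate_def)

lemma conjugate_mult:
  "u \<in> carrier G \<Longrightarrow> v \<in> carrier G \<Longrightarrow> x \<in> carrier G \<Longrightarrow>
   conjugate G (u \<otimes> v) x = conjugate G u (conjugate G v x)"
  by (simp add: conjugate_def m_assoc inv_mult_group)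

lemma mult_word_prod_conjugate:
  assumes "u \<in> carrier G" "ws \<in> lists (carrier G)"
  shows "u \<otimes> word_prod G ws = word_prod G (map (conjugate G u) ws) \<otimes> u"
  using assms(2)
proof (induct ws)
  case (Cons x ws)
  have "x \<in> carrier G" "ws \<in> lists (carrier G)" using Cons by auto
  then have "u \<otimes> word_prod G (x # ws) = conjugate G u x \<otimes> (u \<otimes> word_prod G ws)"
    using assms(1) by (simp add: conjugate_def word_prod_Cons word_prod_closed m_assoc inv_cancel_left)
  also have "\<dots> = conjugate G u x \<otimes> word_prod G (map (conjugate G u) ws) \<otimes> u"
  proof -
    have "word_prod G (map (conjugate G u) ws) \<in> carrier G"
      by (rule word_prod_closed) (use Cons assms(1) conjugate_closed in auto)
    then show ?thesis using Cons assms(1) by (simp add: conjugate_closed m_assoc)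
  qed
  finally show ?case by (simp add: word_prod_Cons)
qed (simp add: assms)

lemma alt_prod_closed: "x \<in> carrier G \<Longrightarrow> y \<in> carrier G \<Longrightarrow> alt_prod G x y k \<in> carrier G"
  by (induct k arbitrary: x y) auto

lemma word_prod_alt_list: "word_prod G (alt_list x y k) = alt_prod G x y k"
  by (induct k arbitrary: x y) (auto simp: word_prod_Cons)

lemma alt_prod_Suc_right:
  "x \<in> carrier G \<Longrightarrow> y \<in> carrier G \<Longrightarrow>
   alt_prod G x y (Suc k) = alt_prod G x y k \<otimes> alt_letter x y k"
proof (induct k arbitrary: x y)
  case (Suc k)
  have "alt_prod G x y (Suc (Suc k)) = x \<otimes> (alt_prod G y x k \<otimes> alt_letter y x k)"
    using Suc by simp
  then show ?case using Suc.prems by (simp add: m_assoc alt_prod_closed alt_letter_def)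
qed (simp add: alt_letter_def)

lemma alt_prod_add:
  "x \<in> carrier G \<Longrightarrow> y \<in> carrier G \<Longrightarrow>
   alt_prod G x y (i + l) = alt_prod G x y i \<otimes> alt_prod G (alt_letter x y i) (alt_letter y x i) l"
proof (induct i arbitrary: x y)
  case (Suc i)
  have "alt_prod G x y (Suc i + l) = x \<otimes> alt_prod G y x (i + l)" by simp
  also have "\<dots> = x \<otimes> (alt_prod G y x i \<otimes> alt_prod G (alt_letter y x i) (alt_letter x y i) l)"
    using Suc by simp
  finally show ?case
    using Suc.prems by (simp add: m_assoc alt_prod_closed alt_letter_def)
qed (simp add: alt_prod_closed alt_letter_def)

lemma alt_prod_add_even:
  assumes "x \<in> carrier G" "y \<in> carrier G"
  shows "alt_prod G x y (2 * d + r) = (x \<otimes> y) [^] d \<otimes> alt_prod G x y r"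
proof (induct d)
  case (Suc d)
  have "alt_prod G x y (2 * Suc d + r) = (x \<otimes> y) \<otimes> ((x \<otimes> y) [^] d \<otimes> alt_prod G x y r)"
    using Suc assms by (simp add: numeral_2_eq_2 m_assoc alt_prod_closed)
  also have "\<dots> = (x \<otimes> y) [^] Suc d \<otimes> alt_prod G x y r"
    using nat_pow_Suc2[of "x \<otimes> y" d] assms by (simp add: m_assoc[symmetric] alt_prod_closed)
  finally show ?case .
qed (simp add: assms alt_prod_closed)

lemma alt_prod_order:
  assumes "x \<in> carrier G" "y \<in> carrier G"
  shows "alt_prod G x y (2 * ord (x \<otimes> y)) = \<one>"
  using alt_prod_add_even[OF assms, of "ord (x \<otimes> y)" 0] assms by simp

lemma inv_alt_prod:
  assumes "x \<in> carrier G" "y \<in> carrier G" "x \<otimes> x = \<one>" "y \<otimes> y = \<one>"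
  shows "inv (alt_prod G x y l) = alt_prod G (alt_letter y x l) (alt_letter x y l) l"
  using assms
proof (induct l arbitrary: x y)
  case (Suc l)
  have "inv x = x" using Suc.prems by (simp add: inv_equality)
  then have "inv (alt_prod G x y (Suc l)) = alt_prod G (alt_letter x y l) (alt_letter y x l) l \<otimes> x"
    using Suc by (simp add: inv_mult_group alt_prod_closed)
  then show ?case
    using alt_prod_Suc_right[of "alt_letter x y l" "alt_letter y x l" l] Suc.prems
    by (simp add: alt_letter_def split: if_splits)
qed (simp add: alt_letter_def)

lemma pow_conjugate:
  "x \<in> carrier G \<Longrightarrow> u \<in> carrier G \<Longrightarrow> conjugate G u x [^] (k::nat) = conjugate G u (x [^] k)"
proof (induct k)
  case (Suc k)
  then have "conjugate G u x [^] Suc k = u \<otimes> (x [^] k \<otimes> (inv u \<otimes> u) \<otimes> x) \<otimes> inv u"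
    by (simp add: conjugate_def m_assoc inv_cancel_left)
  then show ?case using Suc.prems by (simp add: conjugate_def)
qed (simp add: conjugate_def)

lemma ord_conjugate: "x \<in> carrier G \<Longrightarrow> u \<in> carrier G \<Longrightarrow> ord (conjugate G u x) = ord x"
proof -
  assume x: "x \<in> carrier G" and u: "u \<in> carrier G"
  have "conjugate G u x [^] k = \<one> \<longleftrightarrow> x [^] k = \<one>" for k :: nat
  proof -
    have "conjugate G u y = \<one> \<longleftrightarrow> y = \<one>" if "y \<in> carrier G" for y
      using that u inv_solve_right'[of \<one> "u \<otimes> y" u] by (auto simp: conjugate_def m_assoc inv_cancel_left)
    then show ?thesis using pow_conjugate[OF x u] x by simp
  qed
  then show ?thesis using ord_unique[of "conjugate G u x" "ord x"] pow_eq_id[OF x] x u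
    by (simp add: conjugate_closed)
qed

end

fun reflection_seq :: "('a, 'b) monoid_scheme \<Rightarrow> 'a list \<Rightarrow> 'a list" where
  "reflection_seq W [] = []"
| "reflection_seq W (c # ws) = c # map (conjugate W c) (reflection_seq W ws)"

text \<open>The classical invariant N(w): the reflections s_1 ... s_i ... s_1 occurring an odd
  number of times along a word s_1 ... s_k. It is invariant under the Coxeter relations and has
  at most k elements, while an alternating word of length at most m(s,t) yields k distinct reflections.\<close>
definition odd_reflections :: "('a, 'b) monoid_scheme \<Rightarrow> 'a list \<Rightarrow> 'a set" where
  "odd_reflections W ws = {x. odd (count_list (reflection_seq W ws) x)}"

lemma length_reflection_seq [simp]: "length (reflection_seq G ws) = length ws"
  by (induct ws) auto

lemma card_odd_reflections: "card (odd_reflections W ws) \<le> length ws"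
proof -
  have "odd_reflections W ws \<subseteq> set (reflection_seq W ws)"
    unfolding odd_reflections_def using count_notin by fastforce
  then have "card (odd_reflections W ws) \<le> card (set (reflection_seq W ws))"
    by (simp add: card_mono)
  then show ?thesis using card_length[of "reflection_seq W ws"] by simp
qed

lemma count_list_distinct: "distinct xs \<Longrightarrow> x \<in> set xs \<Longrightarrow> count_list xs x = 1"
  by (induct xs) auto

context group
begin

lemma reflection_seq_closed: "ws \<in> lists (carrier G) \<Longrightarrow> reflection_seq G ws \<in> lists (carrier G)"
  by (induct ws) (auto simp: conjugate_closed)

lemma reflection_seq_append:
  assumes "u \<in> lists (carrier G)" "v \<in> lists (carrier G)"
  shows "reflection_seq G (u @ v) =
    reflection_seq G u @ map (conjugate G (word_prod G u)) (reflection_seq G v)"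
  using assms(1)
proof (induct u)
  case Nil
  have "map (conjugate G \<one>) (reflection_seq G v) = reflection_seq G v"
    by (rule map_idI) (use reflection_seq_closed[OF assms(2)] in \<open>auto simp: conjugate_def\<close>)
  then show ?case by simp
next
  case (Cons c u)
  have "c \<in> carrier G" "word_prod G u \<in> carrier G" using Cons by (auto simp: word_prod_closed)
  then have "map (conjugate G c) (map (conjugate G (word_prod G u)) (reflection_seq G v))
      = map (conjugate G (word_prod G (c # u))) (reflection_seq G v)"
    using reflection_seq_closed[OF assms(2)] by (auto simp: word_prod_Cons conjugate_mult)
  then show ?case using Cons by simp
qed

lemma reflection_seq_alt_list:
  assumes "x \<in> carrier G" "y \<in> carrier G" "x \<otimes> x = \<one>" "y \<otimes> y = \<one>"
  shows "reflection_seq G (alt_list x y k) = map (\<lambda>j. alt_prod G x y (Suc (2 * j))) [0..<k]"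
  using assms
proof (induct k arbitrary: x y)
  case (Suc k)
  have "inv x = x" using Suc by (simp add: inv_equality)
  have "conjugate G x (alt_prod G y x (Suc (2 * j))) = alt_prod G x y (Suc (2 * Suc j))" for j
  proof -
    have "x \<otimes> alt_prod G y x (2 * j) = alt_prod G x y (2 * j) \<otimes> x"
      using alt_prod_Suc_right[of x y "2 * j"] Suc.prems by (simp add: alt_letter_def)
    then show ?thesis
      using Suc.prems \<open>inv x = x\<close> by (simp add: conjugate_def m_assoc alt_prod_closed)
  qed
  then have "reflection_seq G (alt_list x y (Suc k))
      = x # map (\<lambda>j. alt_prod G x y (Suc (2 * Suc j))) [0..<k]"
    using Suc by simp
  also have "\<dots> = map (\<lambda>j. alt_prod G x y (Suc (2 * j))) [0..<Suc k]"
    using Suc.prems by (simp add: map_upt_Suc del: upt_Suc)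
  finally show ?case .
qed simp

end


section \<open>Coxeter systems\<close>

locale coxeter_sys = group W for W (structure) +
  fixes Waff S
  assumes coxeter_system: "coxeter_system W Waff S"
begin

lemma S_carrier: "S \<subseteq> carrier W"
  using coxeter_system unfolding coxeter_system_def by (meson subgroup.subset subset_trans)

lemma S_carrierI [simp]: "s \<in> S \<Longrightarrow> s \<in> carrier W"
  using S_carrier by blast

lemma lists_S_carrier: "ws \<in> lists S \<Longrightarrow> ws \<in> lists (carrier W)"
  using S_carrier by auto

lemma S_involution: "s \<in> S \<Longrightarrow> s \<otimes> s = \<one>"
  using coxeter_system unfolding coxeter_system_def by blast

lemma inv_S: "s \<in> S \<Longrightarrow> inv s = s"
  using S_involution S_carrierI by (simp add: inv_equality)

lemma Waff_eq: "Waff = word_prod W ` lists S"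
  using coxeter_system unfolding coxeter_system_def by blast

lemma Waff_subgroup: "subgroup Waff W"
  using coxeter_system unfolding coxeter_system_def by blast

lemma cox_equiv_if_word_prod_eq:
  "u \<in> lists S \<Longrightarrow> v \<in> lists S \<Longrightarrow> word_prod W u = word_prod W v \<Longrightarrow> cox_equiv W S u v"
  using coxeter_system unfolding coxeter_system_def by blast

lemma cox_m_commute: "s \<in> S \<Longrightarrow> t \<in> S \<Longrightarrow> cox_m W t s = cox_m W s t"
  using ord_inv[of "s \<otimes> t"] by (simp add: cox_m_def inv_mult_group inv_S)

lemma alt_prod_cox_m:
  "s \<in> S \<Longrightarrow> t \<in> S \<Longrightarrow> alt_prod W s t (2 * cox_m W s t) = \<one>"
  unfolding cox_m_def by (rule alt_prod_order) auto

lemma word_prod_relator: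
  "s \<in> S \<Longrightarrow> t \<in> S \<Longrightarrow> word_prod W (concat (replicate (cox_m W s t) [s, t])) = \<one>"
  by (simp add: concat_replicate_pair word_prod_alt_list alt_prod_cox_m)

lemma word_prod_eq_if_cox_equiv:
  "cox_equiv W S xs ys \<Longrightarrow> xs \<in> lists S \<and> ys \<in> lists S \<and> word_prod W xs = word_prod W ys"
proof (induct rule: cox_equiv.induct)
  case (cox_rel u v s t)
  let ?r = "concat (replicate (cox_m W s t) [s, t])"
  have "?r \<in> lists S" using cox_rel by (simp add: concat_replicate_pair alt_list_in_lists)
  with cox_rel show ?case
    using word_prod_relator[of s t] word_prod_closed[OF lists_S_carrier]
    by (simp add: word_prod_append lists_S_carrier)
qed auto

text \<open>The reflection sequence of a relator (st)^m is a list repeated twice, since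
  (st)^m = 1 makes the j-th reflection periodic in j with period m.\<close>
lemma reflection_seq_relator:
  assumes s: "s \<in> S" and t: "t \<in> S"
  shows "\<exists>L. reflection_seq W (concat (replicate (cox_m W s t) [s, t])) = L @ L"
proof -
  let ?m = "cox_m W s t" and ?f = "\<lambda>j. alt_prod W s t (Suc (2 * j))"
  have sc: "s \<in> carrier W" "t \<in> carrier W" using s t by auto
  have per: "?f (j + ?m) = ?f j" for j
    using alt_prod_add_even[OF sc, of ?m "Suc (2 * j)"] sc
    by (simp add: cox_m_def algebra_simps alt_prod_closed)
  have "[0..<2 * ?m] = [0..<?m] @ map (\<lambda>j. j + ?m) [0..<?m]"
    by (simp add: mult_2 map_add_upt upt_add_eq_append[of 0 ?m])
  then have "reflection_seq W (alt_list s t (2 * ?m)) = map ?f [0..<?m] @ map ?f [0..<?m]"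
    using per by (simp add: reflection_seq_alt_list sc S_involution s t comp_def)
  then show ?thesis unfolding concat_replicate_pair by blast
qed

lemma odd_reflections_cox_equiv: "cox_equiv W S u v \<Longrightarrow> odd_reflections W u = odd_reflections W v"
proof (induct rule: cox_equiv.induct)
  case (cox_rel u v s t)
  let ?r = "concat (replicate (cox_m W s t) [s, t])" and ?c = "conjugate W (word_prod W u)"
  have lists: "u \<in> lists (carrier W)" "v \<in> lists (carrier W)" "?r \<in> lists (carrier W)"
    using cox_rel lists_S_carrier alt_list_in_lists[of s "carrier W" t]
    by (auto simp: concat_replicate_pair)
  obtain L where L: "reflection_seq W ?r = L @ L" using reflection_seq_relator cox_rel by blast
  have "map (conjugate W (word_prod W ?r)) (reflection_seq W v) = reflection_seq W v"
    using reflection_seq_closed[OF lists(2)] word_prod_relator[OF cox_rel(3,4)]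
    by (intro map_idI) (auto simp: conjugate_def)
  then have "reflection_seq W (u @ ?r @ v) = reflection_seq W u @ map ?c (L @ L) @ map ?c (reflection_seq W v)"
    using reflection_seq_append[OF lists(3,2)] reflection_seq_append[OF lists(1), of "?r @ v"] L lists
    by simp
  moreover have "reflection_seq W (u @ v) = reflection_seq W u @ map ?c (reflection_seq W v)"
    using reflection_seq_append[OF lists(1,2)] .
  ultimately have "count_list (reflection_seq W (u @ ?r @ v)) x
      = count_list (reflection_seq W (u @ v)) x + 2 * count_list (map ?c L) x" for x
    by simp
  then show ?case unfolding odd_reflections_def by simp
qed auto

text \<open>Alternating words of length at most m(s,t) are reduced: their k reflections are pairwise
  distinct because st has order m(s,t).\<close>
lemma length_ge_alt_prod:
  assumes s: "s \<in> S" and t: "t \<in> S" and k: "k \<le> cox_m W s t" and m: "cox_m W s t \<noteq> 0"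
    and ws: "ws \<in> lists S" and eq: "word_prod W ws = alt_prod W s t k"
  shows "k \<le> length ws"
proof -
  have sc: "s \<in> carrier W" "t \<in> carrier W" using s t by auto
  let ?f = "\<lambda>j. alt_prod W s t (Suc (2 * j))"
  have "inj_on ?f {0..<k}"
  proof (rule linorder_inj_onI')
    fix a b assume ab: "a \<in> {0..<k}" "b \<in> {0..<k}" "a < b"
    have "?f b = (s \<otimes> t) [^] (b - a) \<otimes> ?f a"
      using alt_prod_add_even[OF sc, of "b - a" "Suc (2 * a)"] ab by (simp add: algebra_simps)
    moreover have "(s \<otimes> t) [^] (b - a) \<noteq> \<one>"
      using ab k m pow_eq_id[of "s \<otimes> t" "b - a"] sc by (auto simp: cox_m_def dest: dvd_imp_le)
    ultimately show "?f a \<noteq> ?f b"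
      using sc alt_prod_closed by (auto simp: r_cancel_one')
  qed
  then have dist: "distinct (reflection_seq W (alt_list s t k))"
    by (simp add: reflection_seq_alt_list sc S_involution s t distinct_map)
  then have "odd_reflections W (alt_list s t k) = set (reflection_seq W (alt_list s t k))"
    unfolding odd_reflections_def using count_list_distinct count_notin by fastforce
  then have "card (odd_reflections W (alt_list s t k)) = k" using distinct_card[OF dist] by simp
  moreover have "cox_equiv W S ws (alt_list s t k)"
    using cox_equiv_if_word_prod_eq[OF ws alt_list_in_lists[OF s t]] eq word_prod_alt_list by simp
  ultimately show ?thesis
    using odd_reflections_cox_equiv card_odd_reflections[of W ws] by simp
qed

lemma inv_word_prod_S: "ws \<in> lists S \<Longrightarrow> inv (word_prod W ws) = word_prod W (rev ws)"
proof (induct ws)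
  case (Cons a ws)
  then have "inv (word_prod W (a # ws)) = word_prod W (rev ws) \<otimes> word_prod W [a]"
    using word_prod_closed[OF lists_S_carrier] by (simp add: word_prod_Cons inv_mult_group inv_S)
  also have "\<dots> = word_prod W (rev (a # ws))"
  proof -
    have "rev ws \<in> lists (carrier W)" "[a] \<in> lists (carrier W)" using Cons by auto
    then show ?thesis by (simp add: word_prod_append)
  qed
  finally show ?case .
qed simp

end

section \<open>Extended Coxeter groups\<close>

locale ext_coxeter_sys = coxeter_sys W Waff S for W (structure) and Waff S +
  fixes Omega
  assumes ext_coxeter: "ext_coxeter W Waff S Omega"
begin

lemma Omega_subgroup: "subgroup Omega W"
  using ext_coxeter unfolding ext_coxeter_def by blast

lemma conjugate_S: "u \<in> Omega \<Longrightarrow> s \<in> S \<Longrightarrow> conjugate W u s \<in> S"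
  using ext_coxeter unfolding ext_coxeter_def conjugate_def by blast

lemma Omega_carrier: "u \<in> Omega \<Longrightarrow> u \<in> carrier W"
  by (rule subgroup.mem_carrier[OF Omega_subgroup])

lemma Waff_carrier: "w \<in> Waff \<Longrightarrow> w \<in> carrier W"
  by (rule subgroup.mem_carrier[OF Waff_subgroup])

lemma word_prod_in_Waff: "ws \<in> lists S \<Longrightarrow> word_prod W ws \<in> Waff"
  unfolding Waff_eq by (rule imageI)

lemma Waff_Omega_decomp: "x \<in> carrier W \<Longrightarrow> \<exists>w\<in>Waff. \<exists>u\<in>Omega. x = w \<otimes> u"
  using ext_coxeter unfolding ext_coxeter_def set_mult_def by blast

lemma Waff_Omega_decomp_unique:
  assumes "w \<in> Waff" "w' \<in> Waff" "u \<in> Omega" "u' \<in> Omega" "w \<otimes> u = w' \<otimes> u'"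
  shows "w = w' \<and> u = u'"
proof -
  have c: "w \<in> carrier W" "w' \<in> carrier W" "u \<in> carrier W" "u' \<in> carrier W"
    using assms Omega_carrier Waff_carrier by auto
  have "inv w' \<otimes> (w \<otimes> u) = u'"
    by (rule inv_solve_left'[THEN iffD2]) (use c assms(5) in auto)
  then have "inv w' \<otimes> w = u' \<otimes> inv u"
    by (intro inv_solve_right[THEN iffD2]) (use c in \<open>auto simp: m_assoc\<close>)
  moreover have "inv w' \<otimes> w \<in> Waff" "u' \<otimes> inv u \<in> Omega"
    using assms Waff_subgroup Omega_subgroup by (auto intro: subgroup.m_closed subgroup.m_inv_closed)
  ultimately have "inv w' \<otimes> w = \<one>" "u' \<otimes> inv u = \<one>"
    using ext_coxeter unfolding ext_coxeter_def by auto
  then show ?thesis using c inv_solve_left'[of \<one> w' w] inv_solve_right'[of \<one> u' u] by simp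
qed

lemma ext_length_mult_Omega:
  assumes y: "y \<in> carrier W" and u: "u \<in> Omega"
  shows "ext_length W S Omega (y \<otimes> u) = ext_length W S Omega y"
proof -
  have uc: "u \<in> carrier W" using Omega_carrier u by blast
  have "(\<exists>u'\<in>Omega. y \<otimes> u = p \<otimes> u') \<longleftrightarrow> (\<exists>u'\<in>Omega. y = p \<otimes> u')" if p: "p \<in> carrier W" for p
  proof
    assume "\<exists>u'\<in>Omega. y \<otimes> u = p \<otimes> u'"
    then obtain u' where u': "u' \<in> Omega" "y \<otimes> u = p \<otimes> u'" by blast
    then have "y = p \<otimes> u' \<otimes> inv u"
      using y uc p Omega_carrier[OF u'(1)] by (intro inv_solve_right[THEN iffD2]) auto
    then have "y = p \<otimes> (u' \<otimes> inv u)"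
      using uc p Omega_carrier[OF u'(1)] by (simp add: m_assoc)
    moreover have "u' \<otimes> inv u \<in> Omega"
      using u u' Omega_subgroup by (simp add: subgroup.m_closed subgroup.m_inv_closed)
    ultimately show "\<exists>u'\<in>Omega. y = p \<otimes> u'" by blast
  next
    assume "\<exists>u'\<in>Omega. y = p \<otimes> u'"
    then obtain u' where u': "u' \<in> Omega" "y = p \<otimes> u'" by blast
    then have "y \<otimes> u = p \<otimes> (u' \<otimes> u)" using uc p Omega_carrier[OF u'(1)] by (simp add: m_assoc)
    moreover have "u' \<otimes> u \<in> Omega" using u u' Omega_subgroup by (simp add: subgroup.m_closed)
    ultimately show "\<exists>u'\<in>Omega. y \<otimes> u = p \<otimes> u'" by blast
  qed
  then have key: "(\<exists>u'\<in>Omega. y \<otimes> u = word_prod W ws \<otimes> u') \<longleftrightarrow> (\<exists>u'\<in>Omega. y = word_prod W ws \<otimes> u')"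
    if "ws \<in> lists S" for ws
    using word_prod_closed[OF lists_S_carrier[OF that]] by blast
  show ?thesis unfolding ext_length_def
    by (intro arg_cong[where f = Least] ext)
      (rule bex_cong[OF refl], rule conj_cong[OF refl], simp add: key)
qed

lemma ext_length_Omega: "u \<in> Omega \<Longrightarrow> ext_length W S Omega u = 0"
  unfolding ext_length_def
  by (rule Least_eq_0) (auto intro!: bexI[of _ "[]"] simp: Omega_carrier)

lemma ext_length_word_prod_le:
  "ws \<in> lists S \<Longrightarrow> u \<in> Omega \<Longrightarrow> ext_length W S Omega (word_prod W ws \<otimes> u) \<le> length ws"
  unfolding ext_length_def by (rule Least_le) blast

lemma ext_length_alt_prod:
  assumes s: "s \<in> S" and t: "t \<in> S" and m: "cox_m W s t \<noteq> 0" and k: "k \<le> cox_m W s t"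
  shows "ext_length W S Omega (alt_prod W s t k) = k"
proof -
  have one: "\<one> \<in> Omega" by (rule subgroup.one_closed[OF Omega_subgroup])
  have alt: "alt_prod W s t k = word_prod W (alt_list s t k) \<otimes> \<one>"
    using s t by (simp add: word_prod_alt_list alt_prod_closed)
  show ?thesis
    unfolding ext_length_def
  proof (rule Least_equality)
    show "\<exists>ws\<in>lists S. length ws = k \<and> (\<exists>u\<in>Omega. alt_prod W s t k = word_prod W ws \<otimes> u)"
      using alt alt_list_in_lists[OF s t, of k] one length_alt_list[of s t k] by blast
  next
    fix l assume "\<exists>ws\<in>lists S. length ws = l \<and> (\<exists>u\<in>Omega. alt_prod W s t k = word_prod W ws \<otimes> u)"
    then obtain ws u where ws: "ws \<in> lists S" "length ws = l" and u: "u \<in> Omega"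
      and e: "alt_prod W s t k = word_prod W ws \<otimes> u" by blast
    have "word_prod W (alt_list s t k) \<otimes> \<one> = word_prod W ws \<otimes> u" using e unfolding alt .
    then have "word_prod W ws = alt_prod W s t k"
      using Waff_Omega_decomp_unique[OF word_prod_in_Waff[OF alt_list_in_lists[OF s t, of k]]
          word_prod_in_Waff[OF ws(1)] one u]
      by (simp add: word_prod_alt_list)
    then show "k \<le> l" using length_ge_alt_prod[OF s t k m ws(1)] ws(2) by simp
  qed
qed

lemma ext_length_S: "s \<in> S \<Longrightarrow> ext_length W S Omega s = 1"
  using ext_length_alt_prod[of s s 1] alt_prod_cox_m[of s s]
  by (simp add: cox_m_def S_involution)

text \<open>Conjugation by \<Omega> permutes S, so w = s_1 \<cdots> s_k u has inverse
  u^{-1} s_k \<cdots> s_1 = (u^{-1} s_k u) \<cdots> (u^{-1} s_1 u) u^{-1} of the same length.\<close>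
lemma ext_length_inv_le:
  assumes x: "x \<in> carrier W"
  shows "ext_length W S Omega (inv x) \<le> ext_length W S Omega x"
proof -
  obtain w u where wu: "w \<in> Waff" "u \<in> Omega" "x = w \<otimes> u" using Waff_Omega_decomp[OF x] by blast
  then obtain vs where "vs \<in> lists S" "w = word_prod W vs" using Waff_eq by blast
  then have "\<exists>ws\<in>lists S. length ws = length vs \<and> (\<exists>u\<in>Omega. x = word_prod W ws \<otimes> u)"
    using wu by blast
  then have "\<exists>ws\<in>lists S. length ws = ext_length W S Omega x \<and> (\<exists>u\<in>Omega. x = word_prod W ws \<otimes> u)"
    unfolding ext_length_def by (rule LeastI)
  then obtain ws u where ws: "ws \<in> lists S" "length ws = ext_length W S Omega x"
    and u: "u \<in> Omega" "x = word_prod W ws \<otimes> u" by blast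
  have iu: "inv u \<in> Omega" "inv u \<in> carrier W"
    using u Omega_subgroup by (auto intro: subgroup.m_inv_closed Omega_carrier)
  have "inv x = inv u \<otimes> word_prod W (rev ws)"
    using u ws lists_S_carrier by (simp add: inv_mult_group word_prod_closed Omega_carrier inv_word_prod_S)
  also have "\<dots> = word_prod W (map (conjugate W (inv u)) (rev ws)) \<otimes> inv u"
    using iu ws lists_S_carrier by (intro mult_word_prod_conjugate) auto
  moreover have "map (conjugate W (inv u)) (rev ws) \<in> lists S" using ws iu conjugate_S by auto
  ultimately show ?thesis
    using ext_length_word_prod_le[of "map (conjugate W (inv u)) (rev ws)" "inv u"] ws iu by simp
qed

lemma ext_length_inv: "x \<in> carrier W \<Longrightarrow> ext_length W S Omega (inv x) = ext_length W S Omega x"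
  using ext_length_inv_le[of x] ext_length_inv_le[of "inv x"] by simp

end


section \<open>Orientations of W\<close>

definition or2_at :: "('a, 'b) monoid_scheme \<Rightarrow> ('a \<Rightarrow> 'a \<Rightarrow> int) \<Rightarrow> 'a \<Rightarrow> 'a \<Rightarrow> 'a \<Rightarrow> bool" where
  "or2_at W ori w s t \<longleftrightarrow>
     (let m = cox_m W s t;
          seq1 = (\<lambda>i. ori (w \<otimes>\<^bsub>W\<^esub> alt_prod W s t i) (if even i then s else t));
          seq2 = (\<lambda>i. ori (w \<otimes>\<^bsub>W\<^esub> alt_prod W t s i) (if even i then t else s))
      in \<exists>k\<le>m.
          ((\<forall>i<m. seq1 i = sign (i < k)) \<and> (\<forall>i<m. seq2 i = - sign (i < m - k))) \<or>
          ((\<forall>i<m. seq1 i = - sign (i < k)) \<and> (\<forall>i<m. seq2 i = sign (i < m - k))))"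

lemma orientation_aff_iff:
  "orientation_aff W Waff S ori \<longleftrightarrow>
     (\<forall>w\<in>Waff. \<forall>s\<in>S. ori w s \<in> {1, -1}) \<and>
     (\<forall>w\<in>Waff. \<forall>s\<in>S. ori (w \<otimes>\<^bsub>W\<^esub> s) s = - ori w s) \<and>
     (\<forall>w\<in>Waff. \<forall>s\<in>S. \<forall>t\<in>S. cox_m W s t \<noteq> 0 \<longrightarrow> or2_at W ori w s t)"
  unfolding orientation_aff_def or2_at_def by (rule refl)

lemma or2_at_signs:
  assumes "or2_at W ori w s t"
  obtains k e where "k \<le> cox_m W s t" "e \<in> {1, -1}"
    "\<forall>i<cox_m W s t. ori (w \<otimes>\<^bsub>W\<^esub> alt_prod W s t i) (alt_letter s t i) = e * sign (i < k)"
    "\<forall>i<cox_m W s t. ori (w \<otimes>\<^bsub>W\<^esub> alt_prod W t s i) (alt_letter t s i) = - e * sign (i < cox_m W s t - k)"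
proof -
  from assms obtain k where "k \<le> cox_m W s t" and
    "(\<forall>i<cox_m W s t. ori (w \<otimes>\<^bsub>W\<^esub> alt_prod W s t i) (alt_letter s t i) = 1 * sign (i < k)) \<and>
     (\<forall>i<cox_m W s t. ori (w \<otimes>\<^bsub>W\<^esub> alt_prod W t s i) (alt_letter t s i) = - 1 * sign (i < cox_m W s t - k)) \<or>
     (\<forall>i<cox_m W s t. ori (w \<otimes>\<^bsub>W\<^esub> alt_prod W s t i) (alt_letter s t i) = -1 * sign (i < k)) \<and>
     (\<forall>i<cox_m W s t. ori (w \<otimes>\<^bsub>W\<^esub> alt_prod W t s i) (alt_letter t s i) = - (-1) * sign (i < cox_m W s t - k))"
    unfolding or2_at_def Let_def alt_letter_def by auto
  then show ?thesis using that by blast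
qed

context coxeter_sys
begin

lemma alt_prod_braid:
  assumes s: "s \<in> S" and t: "t \<in> S"
  shows "alt_prod W s t (cox_m W s t) = alt_prod W t s (cox_m W s t)"
proof -
  let ?m = "cox_m W s t"
  have "alt_prod W s t ?m \<otimes> inv (alt_prod W t s ?m) = alt_prod W s t (?m + ?m)"
    using alt_prod_add[of s t ?m ?m] inv_alt_prod[of t s ?m] s t by (simp add: S_involution)
  also have "\<dots> = \<one>" using alt_prod_cox_m[OF s t] by (simp add: mult_2)
  finally show ?thesis
    using inv_solve_right'[of \<one> "alt_prod W s t ?m" "alt_prod W t s ?m"] s t by (simp add: alt_prod_closed)
qed

lemma alt_prod_reflect:
  assumes s: "s \<in> S" and t: "t \<in> S" and j: "j \<le> cox_m W s t"
  shows "alt_prod W s t (cox_m W s t + j) = alt_prod W t s (cox_m W s t - j)"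
  using j
proof (induct j)
  case 0 then show ?case using alt_prod_braid[OF s t] by simp
next
  case (Suc j)
  let ?m = "cox_m W s t" and ?c = "alt_letter t s (cox_m W s t - Suc j)"
  have c: "?c \<in> S" "?c \<otimes> ?c = \<one>" using s t S_involution by (auto simp: alt_letter_def)
  have "?m - j = Suc (?m - Suc j)" using Suc by simp
  then have "alt_prod W t s (?m - j) = alt_prod W t s (?m - Suc j) \<otimes> ?c"
    using alt_prod_Suc_right[of t s "?m - Suc j"] s t by simp
  then have "alt_prod W s t (?m + Suc j) = alt_prod W t s (?m - Suc j) \<otimes> ?c \<otimes> ?c"
    using alt_prod_Suc_right[of s t "?m + j"] alt_letter_reflect[of j ?m s t] Suc s t by simp
  then show ?case using c s t by (simp add: m_assoc alt_prod_closed)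
qed

end

context ext_coxeter_sys
begin

lemma S_in_Waff: "s \<in> S \<Longrightarrow> s \<in> Waff"
  using word_prod_in_Waff[of "[s]"] by (simp add: word_prod_Cons)

lemma alt_prod_in_Waff: "s \<in> S \<Longrightarrow> t \<in> S \<Longrightarrow> alt_prod W s t i \<in> Waff"
  using word_prod_in_Waff[OF alt_list_in_lists, of s t i] by (simp add: word_prod_alt_list)

lemma conjugate_alt_prod:
  "u \<in> carrier W \<Longrightarrow> s \<in> carrier W \<Longrightarrow> t \<in> carrier W \<Longrightarrow>
   u \<otimes> alt_prod W s t i = alt_prod W (conjugate W u s) (conjugate W u t) i \<otimes> u"
  using mult_word_prod_conjugate[of u "alt_list s t i"] alt_list_in_lists[of s "carrier W" t i]
  by (simp add: word_prod_alt_list map_alt_list)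

lemma cox_m_conjugate:
  "u \<in> Omega \<Longrightarrow> s \<in> S \<Longrightarrow> t \<in> S \<Longrightarrow> cox_m W (conjugate W u s) (conjugate W u t) = cox_m W s t"
  using ord_conjugate[of "s \<otimes> t" u] Omega_carrier[of u]
  by (simp add: cox_m_def conjugate_def m_assoc inv_cancel_left)

text \<open>Orientations of W, characterised intrinsically on all of W: by (OR1) and (OR2) on
  every element, and the twisting rule along \<Omega> coming from (wu, s) \<mapsto> o(w, usu^{-1}).\<close>
definition W_orientation :: "('a \<Rightarrow> 'a \<Rightarrow> int) \<Rightarrow> bool" where
  "W_orientation Or \<longleftrightarrow> (\<forall>x\<in>carrier W. \<forall>s\<in>S. Or x s \<in> {1, -1}) \<and>
     (\<forall>x\<in>carrier W. \<forall>s\<in>S. Or (x \<otimes> s) s = - Or x s) \<and>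
     (\<forall>x\<in>carrier W. \<forall>u\<in>Omega. \<forall>s\<in>S. Or (x \<otimes> u) s = Or x (conjugate W u s)) \<and>
     (\<forall>x\<in>carrier W. \<forall>s\<in>S. \<forall>t\<in>S. cox_m W s t \<noteq> 0 \<longrightarrow> or2_at W Or x s t)"

lemma W_orientation_sign: "W_orientation Or \<Longrightarrow> x \<in> carrier W \<Longrightarrow> s \<in> S \<Longrightarrow> Or x s \<in> {1, -1}"
  unfolding W_orientation_def by blast

lemma W_orientation_flip: "W_orientation Or \<Longrightarrow> x \<in> carrier W \<Longrightarrow> s \<in> S \<Longrightarrow> Or (x \<otimes> s) s = - Or x s"
  unfolding W_orientation_def by blast

lemma W_orientation_Omega:
  "W_orientation Or \<Longrightarrow> x \<in> carrier W \<Longrightarrow> u \<in> Omega \<Longrightarrow> s \<in> S \<Longrightarrow>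
   Or (x \<otimes> u) s = Or x (conjugate W u s)"
  unfolding W_orientation_def by blast

lemma W_orientation_or2:
  "W_orientation Or \<Longrightarrow> x \<in> carrier W \<Longrightarrow> s \<in> S \<Longrightarrow> t \<in> S \<Longrightarrow> cox_m W s t \<noteq> 0 \<Longrightarrow> or2_at W Or x s t"
  unfolding W_orientation_def by blast

context
  fixes ori Or :: "'a \<Rightarrow> 'a \<Rightarrow> int"
  assumes aff: "orientation_aff W Waff S ori"
    and ext: "\<And>w u s. w \<in> Waff \<Longrightarrow> u \<in> Omega \<Longrightarrow> s \<in> S \<Longrightarrow> Or (w \<otimes> u) s = ori w (conjugate W u s)"
begin

lemma ext_orientation_sign:
  assumes wu: "w \<in> Waff" "u \<in> Omega" and s: "s \<in> S"
  shows "Or (w \<otimes> u) s \<in> {1, -1}"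
  using aff wu(1) conjugate_S[OF wu(2) s] ext[OF wu s] unfolding orientation_aff_iff by simp

lemma ext_orientation_flip:
  assumes wu: "w \<in> Waff" "u \<in> Omega" and s: "s \<in> S"
  shows "Or (w \<otimes> u \<otimes> s) s = - Or (w \<otimes> u) s"
proof -
  have s': "conjugate W u s \<in> S" using conjugate_S wu(2) s .
  have ws': "w \<otimes> conjugate W u s \<in> Waff"
    using subgroup.m_closed[OF Waff_subgroup wu(1) S_in_Waff[OF s']] .
  have "w \<otimes> u \<otimes> s = (w \<otimes> conjugate W u s) \<otimes> u"
    using wu s Waff_carrier Omega_carrier by (simp add: conjugate_def m_assoc)
  then have "Or (w \<otimes> u \<otimes> s) s = ori (w \<otimes> conjugate W u s) (conjugate W u s)"
    using ext[OF ws' wu(2) s] by simp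
  also have "\<dots> = - ori w (conjugate W u s)"
    using aff wu(1) s' unfolding orientation_aff_iff by blast
  finally show ?thesis using ext[OF wu s] by simp
qed

lemma ext_orientation_twist:
  assumes wu: "w \<in> Waff" "u \<in> Omega" and u0: "u0 \<in> Omega" and s: "s \<in> S"
  shows "Or (w \<otimes> u \<otimes> u0) s = Or (w \<otimes> u) (conjugate W u0 s)"
proof -
  have uu0: "u \<otimes> u0 \<in> Omega" using subgroup.m_closed[OF Omega_subgroup wu(2) u0] .
  have "Or (w \<otimes> u \<otimes> u0) s = Or (w \<otimes> (u \<otimes> u0)) s"
    using wu u0 Waff_carrier Omega_carrier by (simp add: m_assoc)
  also have "\<dots> = ori w (conjugate W u (conjugate W u0 s))"
    using ext[OF wu(1) uu0 s] conjugate_mult[of u u0 s] wu u0 s Omega_carrier by simp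
  also have "\<dots> = Or (w \<otimes> u) (conjugate W u0 s)"
    using ext[OF wu conjugate_S[OF u0 s]] by simp
  finally show ?thesis .
qed

lemma ext_orientation_or2:
  assumes wu: "w \<in> Waff" "u \<in> Omega" and st: "s \<in> S" "t \<in> S" and m: "cox_m W s t \<noteq> 0"
  shows "or2_at W Or (w \<otimes> u) s t"
proof -
  have along: "Or (w \<otimes> u \<otimes> alt_prod W a b i) (if even i then a else b)
      = ori (w \<otimes> alt_prod W (conjugate W u a) (conjugate W u b) i)
          (if even i then conjugate W u a else conjugate W u b)"
    if ab: "a \<in> S" "b \<in> S" for a b i
  proof -
    have "w \<otimes> u \<otimes> alt_prod W a b i = (w \<otimes> alt_prod W (conjugate W u a) (conjugate W u b) i) \<otimes> u"
      using conjugate_alt_prod[of u a b i] wu ab Waff_carrier Omega_carrier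
      by (simp add: m_assoc alt_prod_closed conjugate_closed)
    moreover have "w \<otimes> alt_prod W (conjugate W u a) (conjugate W u b) i \<in> Waff"
      using subgroup.m_closed[OF Waff_subgroup wu(1) alt_prod_in_Waff] conjugate_S wu(2) ab by blast
    moreover have "(if even i then a else b) \<in> S" using ab by simp
    ultimately show ?thesis
      using ext[of "w \<otimes> alt_prod W (conjugate W u a) (conjugate W u b) i" u "if even i then a else b"] wu(2)
      by (simp add: if_distrib[of "conjugate W u"])
  qed
  have "cox_m W (conjugate W u s) (conjugate W u t) \<noteq> 0"
    using cox_m_conjugate[OF wu(2) st] m by simp
  then have "or2_at W ori w (conjugate W u s) (conjugate W u t)"
    using aff wu(1) conjugate_S[OF wu(2) st(1)] conjugate_S[OF wu(2) st(2)]
    unfolding orientation_aff_iff by blast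
  then show ?thesis
    unfolding or2_at_def Let_def along[OF st] along[OF st(2,1)] cox_m_conjugate[OF wu(2) st] .
qed

lemma W_orientation_if_orientation_aff: "W_orientation Or"
proof -
  have decomp: "\<forall>x\<in>carrier W. P x" if "\<And>w u. w \<in> Waff \<Longrightarrow> u \<in> Omega \<Longrightarrow> P (w \<otimes> u)" for P
    using Waff_Omega_decomp that by blast
  show ?thesis
    unfolding W_orientation_def
    by (intro conjI; rule decomp)
      (use ext_orientation_sign ext_orientation_flip ext_orientation_twist ext_orientation_or2 in blast)+
qed

end

lemma W_orientation_if_orientation_ext:
  assumes "orientation_ext W Waff S Omega Or"
  shows "W_orientation Or"
proof -
  obtain ori where "orientation_aff W Waff S ori"
    and "\<forall>w\<in>Waff. \<forall>u\<in>Omega. \<forall>s\<in>S. Or (w \<otimes> u) s = ori w (u \<otimes> s \<otimes> inv u)"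
    using assms unfolding orientation_ext_def by blast
  then show ?thesis by (intro W_orientation_if_orientation_aff) (auto simp: conjugate_def)
qed

lemma orientation_ext_if_W_orientation:
  assumes "W_orientation Or"
  shows "orientation_ext W Waff S Omega Or"
  unfolding orientation_ext_def
proof (intro exI conjI)
  show "orientation_aff W Waff S Or"
    unfolding orientation_aff_iff using assms Waff_carrier unfolding W_orientation_def by blast
  show "\<forall>w\<in>Waff. \<forall>u\<in>Omega. \<forall>s\<in>S. Or (w \<otimes> u) s = Or w (u \<otimes> s \<otimes> inv u)"
    using W_orientation_Omega[OF assms] Waff_carrier unfolding conjugate_def by blast
qed

lemma W_orientation_shift:
  assumes "W_orientation Or" and x0: "x0 \<in> carrier W"
  shows "W_orientation (\<lambda>x. Or (x0 \<otimes> x))"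
proof -
  have "or2_at W (\<lambda>x s. Or (x0 \<otimes> x) s) x s t"
    if "x \<in> carrier W" "s \<in> S" "t \<in> S" "cox_m W s t \<noteq> 0" for x s t
    using W_orientation_or2[OF assms(1) _ that(2-4), of "x0 \<otimes> x"] x0 that
    by (simp add: or2_at_def m_assoc alt_prod_closed)
  moreover have "Or (x0 \<otimes> (x \<otimes> s)) s = - Or (x0 \<otimes> x) s" if "x \<in> carrier W" "s \<in> S" for x s
    using W_orientation_flip[OF assms(1), of "x0 \<otimes> x" s] x0 that by (simp add: m_assoc)
  moreover have "Or (x0 \<otimes> (x \<otimes> u)) s = Or (x0 \<otimes> x) (conjugate W u s)"
    if "x \<in> carrier W" "u \<in> Omega" "s \<in> S" for x u s
    using W_orientation_Omega[OF assms(1), of "x0 \<otimes> x" u s] x0 that Omega_carrier by (simp add: m_assoc)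
  ultimately show ?thesis
    using W_orientation_sign[OF assms(1)] x0 unfolding W_orientation_def by simp
qed

text \<open>The braid relation turns the prefix of length m + j of the relator into the prefix of
  length m - j of the word alternating from t, and then (OR1) applies.\<close>
lemma W_orientation_reflect:
  assumes "W_orientation Or" and x: "x \<in> carrier W" and s: "s \<in> S" and t: "t \<in> S"
    and j: "j < cox_m W s t"
  shows "Or (x \<otimes> alt_prod W s t (cox_m W s t + j)) (alt_letter s t (cox_m W s t + j))
       = - Or (x \<otimes> alt_prod W t s (cox_m W s t - Suc j)) (alt_letter t s (cox_m W s t - Suc j))"
proof -
  let ?m = "cox_m W s t" and ?c = "alt_letter t s (cox_m W s t - Suc j)"
  have c: "?c \<in> S" using s t by (simp add: alt_letter_def)
  have "?m - j = Suc (?m - Suc j)" using j by simp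
  then have "x \<otimes> alt_prod W s t (?m + j) = (x \<otimes> alt_prod W t s (?m - Suc j)) \<otimes> ?c"
    using alt_prod_reflect[OF s t, of j] alt_prod_Suc_right[of t s "?m - Suc j"] j x s t c
    by (simp add: m_assoc alt_prod_closed)
  then show ?thesis
    unfolding alt_letter_reflect[OF j] using W_orientation_flip[OF assms(1) _ c] x s t
    by (simp add: alt_prod_closed)
qed

text \<open>(OR2) gives the signs on the first m positions, W_orientation_reflect on the last m.\<close>
lemma W_orientation_relator_signs:
  assumes "W_orientation Or" and x: "x \<in> carrier W" and s: "s \<in> S" and t: "t \<in> S"
    and m: "cox_m W s t \<noteq> 0"
  obtains k e where "k \<le> cox_m W s t" "e \<in> {1, -1}"
    "\<And>i. i < 2 * cox_m W s t \<Longrightarrow> Or (x \<otimes> alt_prod W s t i) (alt_letter s t i)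
       = (if k \<le> i \<and> i < k + cox_m W s t then - e else e)"
proof -
  let ?m = "cox_m W s t"
  obtain k e where k: "k \<le> ?m" and e: "e \<in> {1, -1}"
    and first: "\<forall>i<?m. Or (x \<otimes> alt_prod W s t i) (alt_letter s t i) = e * sign (i < k)"
    and other: "\<forall>i<?m. Or (x \<otimes> alt_prod W t s i) (alt_letter t s i) = - e * sign (i < ?m - k)"
    using or2_at_signs[OF W_orientation_or2[OF assms(1) x s t m]] by blast
  have "Or (x \<otimes> alt_prod W s t i) (alt_letter s t i) = (if k \<le> i \<and> i < k + ?m then - e else e)"
    if i: "i < 2 * ?m" for i
  proof (cases "i < ?m")
    case True then show ?thesis using first k by (auto simp: sign_def)
  next
    case False
    then obtain j where j: "i = ?m + j" "j < ?m" using i by (metis add_diff_inverse_nat mult_2 nat_add_left_cancel_less)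
    have "?m - Suc j < ?m - k \<longleftrightarrow> k \<le> j" using j k by arith
    then show ?thesis
      using W_orientation_reflect[OF assms(1) x s t j(2)] other j k by (auto simp: sign_def)
  qed
  then show ?thesis using that k e by blast
qed

end

section \<open>The map \<theta> along words\<close>

definition signed_gen :: "('g, 'c) monoid_scheme \<Rightarrow> ('g \<Rightarrow> nat) \<Rightarrow> int \<Rightarrow> 'g \<Rightarrow> ('g \<times> bool) list set" where
  "signed_gen G len e x =
     (if e = 1 then A_gen G len x else inv\<^bsub>A_group G len\<^esub> (A_gen G len (inv\<^bsub>G\<^esub> x)))"

text \<open>The product of the T_{n_{s_i}}^{\<plusminus>1}; the argument g is the part of the element
  already read, so the i-th sign is ori(g n_{s_1} \<cdots> n_{s_{i-1}}, s_i).\<close>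
fun theta_word :: "('g, 'c) monoid_scheme \<Rightarrow> ('g \<Rightarrow> nat) \<Rightarrow> ('w \<Rightarrow> 'g) \<Rightarrow> ('g \<Rightarrow> 'w \<Rightarrow> int)
    \<Rightarrow> 'g \<Rightarrow> 'w list \<Rightarrow> ('g \<times> bool) list set" where
  "theta_word G len n ori g [] = \<one>\<^bsub>A_group G len\<^esub>"
| "theta_word G len n ori g (s # ws) =
     signed_gen G len (ori g s) (n s) \<otimes>\<^bsub>A_group G len\<^esub> theta_word G len n ori (g \<otimes>\<^bsub>G\<^esub> n s) ws"

lemma (in group) mult_eq_swap_inv:
  assumes "y \<otimes> a = b \<otimes> x" "x \<in> carrier G" "y \<in> carrier G" "a \<in> carrier G" "b \<in> carrier G"
  shows "a \<otimes> inv x = inv y \<otimes> b"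
  using assms by (metis inv_solve_left inv_solve_right m_assoc inv_closed m_closed)

locale pro_p_coxeter_sys = ext_coxeter_sys W Waff S Omega for W (structure) and Waff S Omega +
  fixes G :: "('g, 'c) monoid_scheme" and prj :: "'g \<Rightarrow> 'a" and n :: "'a \<Rightarrow> 'g"
  assumes pro_p_coxeter: "pro_p_coxeter G W Waff S Omega prj n"
begin

abbreviation "len \<equiv> pro_length W S Omega prj"
abbreviation "AA \<equiv> A_group G len"
abbreviation "TT \<equiv> A_gen G len"
abbreviation "sgen \<equiv> signed_gen G len"
abbreviation "theta_w \<equiv> theta_word G len n"
abbreviation "lift ws \<equiv> word_prod G (map n ws)"

sublocale G: group G
  using pro_p_coxeter unfolding pro_p_coxeter_def by blast

sublocale P: group_hom G W prj
  using pro_p_coxeter is_group unfolding pro_p_coxeter_def group_hom_def group_hom_axioms_def by blast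

sublocale A: group AA
  by (rule G.group_A_group)

lemma n_closed: "s \<in> S \<Longrightarrow> n s \<in> carrier G"
  using pro_p_coxeter unfolding pro_p_coxeter_def by blast

lemma prj_n: "s \<in> S \<Longrightarrow> prj (n s) = s"
  using pro_p_coxeter unfolding pro_p_coxeter_def by blast

lemma one_Omega: "\<one> \<in> Omega"
  by (rule subgroup.one_closed[OF Omega_subgroup])

lemma lift_closed: "ws \<in> lists S \<Longrightarrow> lift ws \<in> carrier G"
  by (rule G.word_prod_closed) (auto simp: n_closed)

lemma lift_append: "ws \<in> lists S \<Longrightarrow> vs \<in> lists S \<Longrightarrow> lift (ws @ vs) = lift ws \<otimes>\<^bsub>G\<^esub> lift vs"
  unfolding map_append by (rule G.word_prod_append) (auto simp: n_closed)

lemma prj_lift: "ws \<in> lists S \<Longrightarrow> prj (lift ws) = word_prod W ws"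
  by (induct ws) (auto simp: G.word_prod_Cons word_prod_Cons n_closed prj_n lift_closed)

lemma len_eq: "len g = ext_length W S Omega (prj g)"
  by (simp add: pro_length_def)

lemma len_Omega: "g \<in> carrier G \<Longrightarrow> prj g \<in> Omega \<Longrightarrow> len g = 0"
  by (simp add: len_eq ext_length_Omega)

lemma len_S_Omega: "g \<in> carrier G \<Longrightarrow> s \<in> S \<Longrightarrow> u \<in> Omega \<Longrightarrow> prj g = s \<otimes> u \<Longrightarrow> len g = 1"
  by (simp add: len_eq ext_length_mult_Omega ext_length_S)

lemma len_n: "s \<in> S \<Longrightarrow> len (n s) = 1"
  using len_S_Omega[of "n s" s \<one>] by (simp add: n_closed prj_n one_Omega)

lemma len_mult_Omega: "g \<in> carrier G \<Longrightarrow> v \<in> carrier G \<Longrightarrow> prj v \<in> Omega \<Longrightarrow> len (g \<otimes>\<^bsub>G\<^esub> v) = len g"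
  by (simp add: len_eq ext_length_mult_Omega)

lemma len_kernel_mult: "g \<in> carrier G \<Longrightarrow> v \<in> carrier G \<Longrightarrow> prj v = \<one> \<Longrightarrow> len (v \<otimes>\<^bsub>G\<^esub> g) = len g"
  by (simp add: len_eq)

lemma len_inv: "g \<in> carrier G \<Longrightarrow> len (inv\<^bsub>G\<^esub> g) = len g"
  by (simp add: len_eq ext_length_inv)

lemma TT_closed: "x \<in> carrier G \<Longrightarrow> TT x \<in> carrier AA"
  by (rule G.A_gen_closed)

lemma TT_mult:
  "x \<in> carrier G \<Longrightarrow> y \<in> carrier G \<Longrightarrow> len (x \<otimes>\<^bsub>G\<^esub> y) = len x + len y \<Longrightarrow>
   TT x \<otimes>\<^bsub>AA\<^esub> TT y = TT (x \<otimes>\<^bsub>G\<^esub> y)"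
  by (rule G.A_gen_mult)

lemma TT_one: "TT \<one>\<^bsub>G\<^esub> = \<one>\<^bsub>AA\<^esub>"
proof -
  have "TT \<one>\<^bsub>G\<^esub> \<otimes>\<^bsub>AA\<^esub> TT \<one>\<^bsub>G\<^esub> = TT \<one>\<^bsub>G\<^esub>"
    using TT_mult[of "\<one>\<^bsub>G\<^esub>" "\<one>\<^bsub>G\<^esub>"] len_Omega[of "\<one>\<^bsub>G\<^esub>"] one_Omega by simp
  then show ?thesis using TT_closed[of "\<one>\<^bsub>G\<^esub>"] by simp
qed

lemma sgen_closed: "x \<in> carrier G \<Longrightarrow> sgen e x \<in> carrier AA"
  by (simp add: signed_gen_def TT_closed)

lemma sgen_one: "sgen e \<one>\<^bsub>G\<^esub> = \<one>\<^bsub>AA\<^esub>"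
  by (simp add: signed_gen_def TT_one)

lemma sgen_mult:
  assumes x: "x \<in> carrier G" and y: "y \<in> carrier G" and l: "len (x \<otimes>\<^bsub>G\<^esub> y) = len x + len y"
  shows "sgen e x \<otimes>\<^bsub>AA\<^esub> sgen e y = sgen e (x \<otimes>\<^bsub>G\<^esub> y)"
proof (cases "e = 1")
  case False
  have "len (inv\<^bsub>G\<^esub> y \<otimes>\<^bsub>G\<^esub> inv\<^bsub>G\<^esub> x) = len (inv\<^bsub>G\<^esub> y) + len (inv\<^bsub>G\<^esub> x)"
    using l x y len_inv by (simp add: G.inv_mult_group[symmetric])
  then have "TT (inv\<^bsub>G\<^esub> y) \<otimes>\<^bsub>AA\<^esub> TT (inv\<^bsub>G\<^esub> x) = TT (inv\<^bsub>G\<^esub> (x \<otimes>\<^bsub>G\<^esub> y))"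
    using TT_mult x y by (simp add: G.inv_mult_group)
  then show ?thesis
    using False x y by (simp add: signed_gen_def A.inv_mult_group[symmetric] TT_closed)
qed (use assms TT_mult in \<open>simp add: signed_gen_def\<close>)

lemma theta_word_closed: "ws \<in> lists S \<Longrightarrow> theta_w ori g ws \<in> carrier AA"
  by (induct ws arbitrary: g) (auto simp: sgen_closed n_closed)

lemma theta_word_append:
  "a \<in> lists S \<Longrightarrow> b \<in> lists S \<Longrightarrow> g \<in> carrier G \<Longrightarrow>
   theta_w ori g (a @ b) = theta_w ori g a \<otimes>\<^bsub>AA\<^esub> theta_w ori (g \<otimes>\<^bsub>G\<^esub> lift a) b"
proof (induct a arbitrary: g)
  case (Cons s a)
  then have "g \<otimes>\<^bsub>G\<^esub> n s \<otimes>\<^bsub>G\<^esub> lift a = g \<otimes>\<^bsub>G\<^esub> lift (s # a)"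
    by (simp add: G.word_prod_Cons G.m_assoc n_closed lift_closed)
  then show ?case
    using Cons by (simp add: A.m_assoc sgen_closed n_closed theta_word_closed)
qed (simp add: theta_word_closed)

abbreviation induced_by :: "('g \<Rightarrow> 'a \<Rightarrow> int) \<Rightarrow> ('a \<Rightarrow> 'a \<Rightarrow> int) \<Rightarrow> bool" where
  "induced_by ori Or \<equiv> \<forall>h\<in>carrier G. \<forall>s\<in>S. ori h s = Or (prj h) s"

lemma theta_word_prj_cong:
  assumes "induced_by ori Or" "ws \<in> lists S" "g \<in> carrier G" "g' \<in> carrier G" "prj g = prj g'"
  shows "theta_w ori g ws = theta_w ori g' ws"
  using assms(2-)
proof (induct ws arbitrary: g g')
  case (Cons s ws)
  then have "ori g s = ori g' s" using assms(1) by simp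
  moreover have "theta_w ori (g \<otimes>\<^bsub>G\<^esub> n s) ws = theta_w ori (g' \<otimes>\<^bsub>G\<^esub> n s) ws"
    using Cons by (simp add: n_closed)
  ultimately show ?case by simp
qed simp

lemma theta_word_nth:
  "ws \<in> lists S \<Longrightarrow> g \<in> carrier G \<Longrightarrow>
   theta_w ori g ws =
     word_prod AA (map (\<lambda>i. sgen (ori (g \<otimes>\<^bsub>G\<^esub> lift (take i ws)) (ws ! i)) (n (ws ! i))) [0..<length ws])"
proof (induct ws arbitrary: g)
  case (Cons a ws)
  have "g \<otimes>\<^bsub>G\<^esub> lift (take (Suc i) (a # ws)) = (g \<otimes>\<^bsub>G\<^esub> n a) \<otimes>\<^bsub>G\<^esub> lift (take i ws)" for i
  proof -
    have "take i ws \<in> lists S" using Cons by (auto dest: in_set_takeD)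
    then show ?thesis using Cons lift_closed by (simp add: G.word_prod_Cons G.m_assoc n_closed)
  qed
  then show ?case
    using Cons by (simp add: A.word_prod_Cons map_upt_Suc n_closed del: upt_Suc)
qed simp

lemma theta_word_orient_act:
  assumes w: "w \<in> carrier G"
  shows "ws \<in> lists S \<Longrightarrow> g \<in> carrier G \<Longrightarrow> theta_w (orient_act G S ori w) g ws = theta_w ori (w \<otimes>\<^bsub>G\<^esub> g) ws"
proof (induct ws arbitrary: g)
  case (Cons s ws)
  then have "orient_act G S ori w g s = ori (w \<otimes>\<^bsub>G\<^esub> g) s"
    and "w \<otimes>\<^bsub>G\<^esub> (g \<otimes>\<^bsub>G\<^esub> n s) = w \<otimes>\<^bsub>G\<^esub> g \<otimes>\<^bsub>G\<^esub> n s"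
    using w by (simp_all add: orient_act_def G.m_assoc n_closed)
  then show ?case using Cons by (simp add: n_closed)
qed simp

end


context pro_p_coxeter_sys
begin

text \<open>Elements of the kernel T have length 0, so T_\<tau> can be moved across T_x^{\<plusminus>1}.\<close>
lemma sgen_kernel:
  assumes tau: "tau \<in> carrier G" "prj tau = \<one>" and x: "x \<in> carrier G"
  shows "TT tau \<otimes>\<^bsub>AA\<^esub> sgen e x = sgen e x \<otimes>\<^bsub>AA\<^esub> TT (inv\<^bsub>G\<^esub> x \<otimes>\<^bsub>G\<^esub> tau \<otimes>\<^bsub>G\<^esub> x)"
proof -
  let ?t = "inv\<^bsub>G\<^esub> x \<otimes>\<^bsub>G\<^esub> tau \<otimes>\<^bsub>G\<^esub> x"
  have t: "?t \<in> carrier G" "prj ?t = \<one>" using x tau by auto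
  have l: "len tau = 0" "len ?t = 0" using len_Omega tau t one_Omega by auto
  show ?thesis
  proof (cases "e = 1")
    case True
    have "TT tau \<otimes>\<^bsub>AA\<^esub> TT x = TT (tau \<otimes>\<^bsub>G\<^esub> x)"
      using TT_mult[OF tau(1) x] len_kernel_mult[OF x tau] l by simp
    also have "tau \<otimes>\<^bsub>G\<^esub> x = x \<otimes>\<^bsub>G\<^esub> ?t"
      using x tau by (simp add: G.m_assoc G.inv_cancel_left)
    also have "TT (x \<otimes>\<^bsub>G\<^esub> ?t) = TT x \<otimes>\<^bsub>AA\<^esub> TT ?t"
      using TT_mult[OF x t(1)] len_mult_Omega[OF x t(1)] t one_Omega l by simp
    finally show ?thesis using True by (simp add: signed_gen_def)
  next
    case False
    let ?X = "TT (inv\<^bsub>G\<^esub> x)"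
    have ix: "inv\<^bsub>G\<^esub> x \<in> carrier G" using x by simp
    have "?X \<otimes>\<^bsub>AA\<^esub> TT tau = TT (inv\<^bsub>G\<^esub> x \<otimes>\<^bsub>G\<^esub> tau)"
      using TT_mult[OF ix tau(1)] len_mult_Omega[OF ix tau(1)] tau one_Omega l by simp
    also have "inv\<^bsub>G\<^esub> x \<otimes>\<^bsub>G\<^esub> tau = ?t \<otimes>\<^bsub>G\<^esub> inv\<^bsub>G\<^esub> x"
      using x tau by (simp add: G.m_assoc)
    also have "TT (?t \<otimes>\<^bsub>G\<^esub> inv\<^bsub>G\<^esub> x) = TT ?t \<otimes>\<^bsub>AA\<^esub> ?X"
      using TT_mult[OF t(1) ix] len_kernel_mult[OF ix t] l by simp
    finally have "TT tau \<otimes>\<^bsub>AA\<^esub> inv\<^bsub>AA\<^esub> ?X = inv\<^bsub>AA\<^esub> ?X \<otimes>\<^bsub>AA\<^esub> TT ?t"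
      by (rule A.mult_eq_swap_inv) (use TT_closed ix tau t in auto)
    then show ?thesis using False by (simp add: signed_gen_def)
  qed
qed

lemma theta_word_kernel:
  assumes "b \<in> lists S" "tau \<in> carrier G" "prj tau = \<one>"
  shows "TT tau \<otimes>\<^bsub>AA\<^esub> theta_w ori g b = theta_w ori g b \<otimes>\<^bsub>AA\<^esub> TT (inv\<^bsub>G\<^esub> (lift b) \<otimes>\<^bsub>G\<^esub> tau \<otimes>\<^bsub>G\<^esub> lift b)"
  using assms
proof (induct b arbitrary: tau g)
  case (Cons s b)
  let ?t = "inv\<^bsub>G\<^esub> (n s) \<otimes>\<^bsub>G\<^esub> tau \<otimes>\<^bsub>G\<^esub> n s"
  have s: "s \<in> S" "n s \<in> carrier G" and b: "b \<in> lists S" using Cons by (auto simp: n_closed)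
  have t: "?t \<in> carrier G" "prj ?t = \<one>" using s Cons.prems by auto
  have c: "TT tau \<in> carrier AA" "sgen (ori g s) (n s) \<in> carrier AA" "TT ?t \<in> carrier AA"
     "theta_w ori (g \<otimes>\<^bsub>G\<^esub> n s) b \<in> carrier AA"
    using TT_closed Cons.prems t sgen_closed s theta_word_closed[OF b] by auto
  have "inv\<^bsub>G\<^esub> (lift b) \<otimes>\<^bsub>G\<^esub> ?t \<otimes>\<^bsub>G\<^esub> lift b
      = inv\<^bsub>G\<^esub> (lift (s # b)) \<otimes>\<^bsub>G\<^esub> tau \<otimes>\<^bsub>G\<^esub> lift (s # b)"
    using s lift_closed[OF b] Cons.prems by (simp add: G.word_prod_Cons G.inv_mult_group G.m_assoc)
  then have IH: "TT ?t \<otimes>\<^bsub>AA\<^esub> theta_w ori (g \<otimes>\<^bsub>G\<^esub> n s) b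
      = theta_w ori (g \<otimes>\<^bsub>G\<^esub> n s) b \<otimes>\<^bsub>AA\<^esub> TT (inv\<^bsub>G\<^esub> (lift (s # b)) \<otimes>\<^bsub>G\<^esub> tau \<otimes>\<^bsub>G\<^esub> lift (s # b))"
    using Cons.hyps(3)[OF t] by simp
  have "lift (s # b) \<in> carrier G" using s b by (intro lift_closed) auto
  then have c': "TT (inv\<^bsub>G\<^esub> (lift (s # b)) \<otimes>\<^bsub>G\<^esub> tau \<otimes>\<^bsub>G\<^esub> lift (s # b)) \<in> carrier AA"
    using Cons.prems by (simp add: TT_closed)
  have "TT tau \<otimes>\<^bsub>AA\<^esub> theta_w ori g (s # b)
      = (TT tau \<otimes>\<^bsub>AA\<^esub> sgen (ori g s) (n s)) \<otimes>\<^bsub>AA\<^esub> theta_w ori (g \<otimes>\<^bsub>G\<^esub> n s) b"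
    using c by (simp add: A.m_assoc)
  also have "\<dots> = sgen (ori g s) (n s) \<otimes>\<^bsub>AA\<^esub> (TT ?t \<otimes>\<^bsub>AA\<^esub> theta_w ori (g \<otimes>\<^bsub>G\<^esub> n s) b)"
    using c sgen_kernel[OF Cons.prems(1,2) s(2)] by (simp add: A.m_assoc)
  also have "\<dots> = theta_w ori g (s # b) \<otimes>\<^bsub>AA\<^esub> TT (inv\<^bsub>G\<^esub> (lift (s # b)) \<otimes>\<^bsub>G\<^esub> tau \<otimes>\<^bsub>G\<^esub> lift (s # b))"
    unfolding IH using c c' by (simp add: A.m_assoc)
  finally show ?case .
qed (simp add: TT_closed)

text \<open>Both v n_s and n_{s'} v' have length one, so the defining relations of \<AA> apply on
  both sides.\<close>
lemma sgen_Omega: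
  assumes v: "v \<in> carrier G" "prj v \<in> Omega" and s: "s \<in> S"
  defines "s' \<equiv> conjugate W (prj v) s"
  defines "v' \<equiv> inv\<^bsub>G\<^esub> (n s') \<otimes>\<^bsub>G\<^esub> v \<otimes>\<^bsub>G\<^esub> n s"
  shows "v' \<in> carrier G" "prj v' = prj v" "v \<otimes>\<^bsub>G\<^esub> n s = n s' \<otimes>\<^bsub>G\<^esub> v'"
    and "TT v \<otimes>\<^bsub>AA\<^esub> sgen e (n s) = sgen e (n s') \<otimes>\<^bsub>AA\<^esub> TT v'"
proof -
  let ?u = "prj v"
  have s': "s' \<in> S" unfolding s'_def using conjugate_S v s by simp
  have ns: "n s \<in> carrier G" "n s' \<in> carrier G" using n_closed s s' by auto
  have u: "?u \<in> carrier W" using v by simp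
  have us: "?u \<otimes> s = s' \<otimes> ?u" unfolding s'_def conjugate_def using u s by (simp add: m_assoc)
  show v': "v' \<in> carrier G" unfolding v'_def using ns v by simp
  have "prj v' = inv s' \<otimes> (s' \<otimes> ?u)"
    unfolding v'_def using ns v s s' us u by (simp add: prj_n m_assoc)
  then show pv': "prj v' = ?u" using u s' by (simp add: inv_cancel_left)
  show e: "v \<otimes>\<^bsub>G\<^esub> n s = n s' \<otimes>\<^bsub>G\<^esub> v'"
    unfolding v'_def using ns v by (simp add: G.m_assoc G.inv_cancel_left)
  have l: "len v = 0" "len v' = 0" using len_Omega v v' pv' by auto
  show "TT v \<otimes>\<^bsub>AA\<^esub> sgen e (n s) = sgen e (n s') \<otimes>\<^bsub>AA\<^esub> TT v'"
  proof (cases "e = 1")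
    case True
    have l1: "len (v \<otimes>\<^bsub>G\<^esub> n s) = 1"
      by (rule len_S_Omega[OF _ s' v(2)]) (use v ns us prj_n[OF s] in auto)
    have "TT v \<otimes>\<^bsub>AA\<^esub> TT (n s) = TT (v \<otimes>\<^bsub>G\<^esub> n s)"
      using TT_mult[OF v(1) ns(1)] l1 l len_n[OF s] by simp
    also have "\<dots> = TT (n s') \<otimes>\<^bsub>AA\<^esub> TT v'"
      using TT_mult[OF ns(2) v'] e l1 l len_n[OF s'] by simp
    finally show ?thesis using True by (simp add: signed_gen_def)
  next
    case False
    let ?X = "TT (inv\<^bsub>G\<^esub> (n s))" and ?Y = "TT (inv\<^bsub>G\<^esub> (n s'))"
    have ins: "inv\<^bsub>G\<^esub> (n s) \<in> carrier G" "inv\<^bsub>G\<^esub> (n s') \<in> carrier G" using ns by auto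
    have lin: "len (inv\<^bsub>G\<^esub> (n s)) = 1" "len (inv\<^bsub>G\<^esub> (n s')) = 1"
      using len_inv ns len_n s s' by auto
    have "prj (inv\<^bsub>G\<^esub> (n s')) = s'" using ns s' by (simp add: prj_n inv_S)
    then have l2: "len (inv\<^bsub>G\<^esub> (n s') \<otimes>\<^bsub>G\<^esub> v) = 1"
      using len_S_Omega[OF _ s' v(2)] v ins by simp
    have e2: "inv\<^bsub>G\<^esub> (n s') \<otimes>\<^bsub>G\<^esub> v = v' \<otimes>\<^bsub>G\<^esub> inv\<^bsub>G\<^esub> (n s)"
      unfolding v'_def using ns v by (simp add: G.m_assoc)
    have "?Y \<otimes>\<^bsub>AA\<^esub> TT v = TT (inv\<^bsub>G\<^esub> (n s') \<otimes>\<^bsub>G\<^esub> v)"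
      using TT_mult[OF ins(2) v(1)] l2 lin l by simp
    also have "\<dots> = TT v' \<otimes>\<^bsub>AA\<^esub> ?X"
      using TT_mult[OF v' ins(1)] l2 lin l e2 by simp
    finally have "TT v \<otimes>\<^bsub>AA\<^esub> inv\<^bsub>AA\<^esub> ?X = inv\<^bsub>AA\<^esub> ?Y \<otimes>\<^bsub>AA\<^esub> TT v'"
      by (rule A.mult_eq_swap_inv) (use TT_closed ins v v' in auto)
    then show ?thesis using False by (simp add: signed_gen_def)
  qed
qed

end


context pro_p_coxeter_sys
begin

text \<open>Moving T_v with prj v = u \<in> \<Omega> through \<theta> along a word conjugates the word by u;
  the signs agree by the twisting rule of W_orientation.\<close>
lemma theta_word_Omega:
  assumes rep: "induced_by ori Or" and Or: "W_orientation Or"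
  shows "ws \<in> lists S \<Longrightarrow> g \<in> carrier G \<Longrightarrow> v \<in> carrier G \<Longrightarrow> prj v \<in> Omega \<Longrightarrow>
    \<exists>v'. v' \<in> carrier G \<and> prj v' = prj v \<and>
      v \<otimes>\<^bsub>G\<^esub> lift ws = lift (map (conjugate W (prj v)) ws) \<otimes>\<^bsub>G\<^esub> v' \<and>
      TT v \<otimes>\<^bsub>AA\<^esub> theta_w ori (g \<otimes>\<^bsub>G\<^esub> v) ws = theta_w ori g (map (conjugate W (prj v)) ws) \<otimes>\<^bsub>AA\<^esub> TT v'"
proof (induct ws arbitrary: g v)
  case Nil
  then show ?case by (intro exI[of _ v]) (simp add: TT_closed)
next
  case (Cons s ws)
  let ?u = "prj v"
  let ?s' = "conjugate W ?u s"
  let ?v1 = "inv\<^bsub>G\<^esub> (n ?s') \<otimes>\<^bsub>G\<^esub> v \<otimes>\<^bsub>G\<^esub> n s"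
  have s: "s \<in> S" and ws: "ws \<in> lists S" and g: "g \<in> carrier G" and v: "v \<in> carrier G" "?u \<in> Omega"
    using Cons.prems by auto
  have s': "?s' \<in> S" using conjugate_S v s by simp
  have ns: "n s \<in> carrier G" "n ?s' \<in> carrier G" using n_closed s s' by auto
  note v1 = sgen_Omega[OF v s]
  have gs': "g \<otimes>\<^bsub>G\<^esub> n ?s' \<in> carrier G" using g ns by simp
  have "prj ?v1 \<in> Omega" using v1(2) v by simp
  note IH = Cons.hyps[OF ws gs' v1(1) this, unfolded v1(2)]
  obtain v'' where v'': "v'' \<in> carrier G" "prj v'' = ?u"
    "?v1 \<otimes>\<^bsub>G\<^esub> lift ws = lift (map (conjugate W ?u) ws) \<otimes>\<^bsub>G\<^esub> v''"
    "TT ?v1 \<otimes>\<^bsub>AA\<^esub> theta_w ori ((g \<otimes>\<^bsub>G\<^esub> n ?s') \<otimes>\<^bsub>G\<^esub> ?v1) ws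
       = theta_w ori (g \<otimes>\<^bsub>G\<^esub> n ?s') (map (conjugate W ?u) ws) \<otimes>\<^bsub>AA\<^esub> TT v''"
    using IH by blast
  have sign: "ori (g \<otimes>\<^bsub>G\<^esub> v) s = ori g ?s'"
    using rep W_orientation_Omega[OF Or _ v(2) s] g v s s' by simp
  have gvs: "g \<otimes>\<^bsub>G\<^esub> v \<otimes>\<^bsub>G\<^esub> n s = (g \<otimes>\<^bsub>G\<^esub> n ?s') \<otimes>\<^bsub>G\<^esub> ?v1"
    using v1(3) g ns v1(1) v by (simp add: G.m_assoc)
  have cws: "map (conjugate W ?u) ws \<in> lists S" using ws conjugate_S[OF v(2)] by auto
  have c: "TT v \<in> carrier AA" "sgen (ori g ?s') (n s) \<in> carrier AA" "sgen (ori g ?s') (n ?s') \<in> carrier AA"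
    "TT ?v1 \<in> carrier AA" "TT v'' \<in> carrier AA"
    "theta_w ori (g \<otimes>\<^bsub>G\<^esub> v \<otimes>\<^bsub>G\<^esub> n s) ws \<in> carrier AA"
    "theta_w ori (g \<otimes>\<^bsub>G\<^esub> n ?s') (map (conjugate W ?u) ws) \<in> carrier AA"
    using TT_closed g v v1 v'' sgen_closed ns theta_word_closed ws cws by auto
  have "TT v \<otimes>\<^bsub>AA\<^esub> theta_w ori (g \<otimes>\<^bsub>G\<^esub> v) (s # ws)
      = (TT v \<otimes>\<^bsub>AA\<^esub> sgen (ori g ?s') (n s)) \<otimes>\<^bsub>AA\<^esub> theta_w ori (g \<otimes>\<^bsub>G\<^esub> v \<otimes>\<^bsub>G\<^esub> n s) ws"
    using sign c by (simp add: A.m_assoc)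
  also have "\<dots> = sgen (ori g ?s') (n ?s') \<otimes>\<^bsub>AA\<^esub> (TT ?v1 \<otimes>\<^bsub>AA\<^esub> theta_w ori ((g \<otimes>\<^bsub>G\<^esub> n ?s') \<otimes>\<^bsub>G\<^esub> ?v1) ws)"
    unfolding v1(4) gvs[symmetric] using c by (simp add: A.m_assoc)
  also have "\<dots> = theta_w ori g (map (conjugate W ?u) (s # ws)) \<otimes>\<^bsub>AA\<^esub> TT v''"
    unfolding v''(4) using c by (simp add: A.m_assoc)
  finally have th: "TT v \<otimes>\<^bsub>AA\<^esub> theta_w ori (g \<otimes>\<^bsub>G\<^esub> v) (s # ws)
      = theta_w ori g (map (conjugate W ?u) (s # ws)) \<otimes>\<^bsub>AA\<^esub> TT v''" .
  have "v \<otimes>\<^bsub>G\<^esub> lift (s # ws) = n ?s' \<otimes>\<^bsub>G\<^esub> (?v1 \<otimes>\<^bsub>G\<^esub> lift ws)"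
    using v1(1,3) v ns lift_closed[OF ws] by (simp add: G.word_prod_Cons G.m_assoc[symmetric])
  also have "\<dots> = lift (map (conjugate W ?u) (s # ws)) \<otimes>\<^bsub>G\<^esub> v''"
    unfolding v''(3) using ns v'' lift_closed[OF cws] by (simp add: G.word_prod_Cons G.m_assoc)
  finally show ?case using th v'' by blast
qed

end


section \<open>\<theta> on relators\<close>

context pro_p_coxeter_sys
begin

lemma len_lift_alt:
  assumes s: "s \<in> S" and t: "t \<in> S" and m: "cox_m W s t \<noteq> 0" and j: "j \<le> cox_m W s t"
  shows "len (lift (map (alt_letter s t) [a..<a + j])) = j"
proof -
  have "prj (lift (map (alt_letter s t) [a..<a + j])) = word_prod W (map (alt_letter s t) [a..<a + j])"
    using prj_lift[OF alt_letter_in_lists[OF s t]] by simp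
  also have "\<dots> = alt_prod W (alt_letter s t a) (alt_letter s t (Suc a)) j"
    by (simp only: map_alt_letter_upt word_prod_alt_list)
  finally show ?thesis
    using ext_length_alt_prod[OF s t m j] ext_length_alt_prod[OF t s, of j] m j cox_m_commute[OF s t]
    by (simp add: len_eq alt_letter_def)
qed

lemma sgen_alt_block:
  assumes s: "s \<in> S" and t: "t \<in> S" and m: "cox_m W s t \<noteq> 0" and j: "j \<le> cox_m W s t"
  shows "word_prod AA (map (\<lambda>i. sgen e (n (alt_letter s t i))) [a..<a + j])
    = sgen e (lift (map (alt_letter s t) [a..<a + j]))"
  using j
proof (induct j)
  case 0 then show ?case by (simp add: sgen_one)
next
  case (Suc j)
  let ?X = "lift (map (alt_letter s t) [a..<a + j])" and ?N = "n (alt_letter s t (a + j))"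
  have c: "alt_letter s t (a + j) \<in> S" using s t by (simp add: alt_letter_def)
  have lists: "map (alt_letter s t) [a..<a + j] \<in> lists S" "[alt_letter s t (a + j)] \<in> lists S"
    using alt_letter_in_lists[OF s t] c by auto
  have Xc: "?X \<in> carrier G" using lift_closed[OF lists(1)] .
  have XN: "lift (map (alt_letter s t) [a..<a + Suc j]) = ?X \<otimes>\<^bsub>G\<^esub> ?N"
    using lift_append[OF lists] n_closed[OF c] by (simp add: G.word_prod_Cons)
  have "map (\<lambda>i. sgen e (n (alt_letter s t i))) [a..<a + j] \<in> lists (carrier AA)"
    using sgen_closed n_closed s t by (auto simp: alt_letter_def)
  then have "word_prod AA (map (\<lambda>i. sgen e (n (alt_letter s t i))) [a..<a + Suc j])
      = sgen e ?X \<otimes>\<^bsub>AA\<^esub> sgen e ?N"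
    using Suc sgen_closed[OF n_closed[OF c]] by (simp add: A.word_prod_append A.word_prod_Cons)
  also have "\<dots> = sgen e (lift (map (alt_letter s t) [a..<a + Suc j]))"
    unfolding XN using len_lift_alt[OF s t m, of j a] len_lift_alt[OF s t m Suc.prems, of a] XN
      len_n[OF c] Suc.prems
    by (intro sgen_mult) (use Xc n_closed[OF c] in auto)
  finally show ?case .
qed

text \<open>The value of \<theta> on a relator word with sign pattern e^k (-e)^m e^{m-k}: the length
  relations in \<AA> reduce it to T_\<tau> for the element \<tau> of T it lifts.\<close>
lemma sgen_relator:
  assumes e: "e \<in> {1, -1}" and c: "x \<in> carrier G" "y \<in> carrier G" "z \<in> carrier G"
    and tau: "prj (x \<otimes>\<^bsub>G\<^esub> (y \<otimes>\<^bsub>G\<^esub> z)) = \<one>"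
    and l: "len x = k" "len y = m" "len z = m - k" "k \<le> m"
  shows "sgen e x \<otimes>\<^bsub>AA\<^esub> (sgen (- e) y \<otimes>\<^bsub>AA\<^esub> sgen e z) = TT (x \<otimes>\<^bsub>G\<^esub> (y \<otimes>\<^bsub>G\<^esub> z))"
proof -
  let ?tau = "x \<otimes>\<^bsub>G\<^esub> (y \<otimes>\<^bsub>G\<^esub> z)"
  have tc: "?tau \<in> carrier G" using c by simp
  have lt: "len ?tau = 0" using len_Omega[OF tc] tau one_Omega by simp
  have i: "inv\<^bsub>G\<^esub> x \<in> carrier G" "inv\<^bsub>G\<^esub> y \<in> carrier G" "inv\<^bsub>G\<^esub> z \<in> carrier G" using c by auto
  have li: "len (inv\<^bsub>G\<^esub> x) = k" "len (inv\<^bsub>G\<^esub> y) = m" "len (inv\<^bsub>G\<^esub> z) = m - k"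
    using l c len_inv by auto
  show ?thesis
  proof (cases "e = 1")
    case True
    let ?Q = "inv\<^bsub>G\<^esub> ?tau \<otimes>\<^bsub>G\<^esub> x"
    have Q: "?Q \<in> carrier G" using tc c by simp
    have lQ: "len ?Q = k" using len_kernel_mult[OF c(1), of "inv\<^bsub>G\<^esub> ?tau"] tc tau l by simp
    have "inv\<^bsub>G\<^esub> y = z \<otimes>\<^bsub>G\<^esub> ?Q"
      using c by (simp add: G.inv_mult_group G.m_assoc G.inv_cancel_left)
    then have T1: "TT (inv\<^bsub>G\<^esub> y) = TT z \<otimes>\<^bsub>AA\<^esub> TT ?Q"
      using TT_mult[OF c(3) Q] li l lQ by simp
    have "x = ?tau \<otimes>\<^bsub>G\<^esub> ?Q" using tc c by (simp add: G.inv_cancel_left)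
    then have T2: "TT x = TT ?tau \<otimes>\<^bsub>AA\<^esub> TT ?Q"
      using TT_mult[OF tc Q] l lQ lt by simp
    show ?thesis unfolding signed_gen_def using True T1 T2 TT_closed tc Q c
      by (simp add: A.inv_mult_group A.m_assoc A.inv_cancel_left)
  next
    case False
    then have e: "e = -1" using e by simp
    have l1: "len (inv\<^bsub>G\<^esub> x \<otimes>\<^bsub>G\<^esub> ?tau) = k" using len_mult_Omega[OF i(1) tc] tau one_Omega li by simp
    have T1: "TT (inv\<^bsub>G\<^esub> x) \<otimes>\<^bsub>AA\<^esub> TT ?tau = TT (inv\<^bsub>G\<^esub> x \<otimes>\<^bsub>G\<^esub> ?tau)"
      using TT_mult[OF i(1) tc] l1 li lt by simp
    have "y = (inv\<^bsub>G\<^esub> x \<otimes>\<^bsub>G\<^esub> ?tau) \<otimes>\<^bsub>G\<^esub> inv\<^bsub>G\<^esub> z"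
      using c by (simp add: G.m_assoc G.inv_cancel_left)
    then have T2: "TT (inv\<^bsub>G\<^esub> x \<otimes>\<^bsub>G\<^esub> ?tau) \<otimes>\<^bsub>AA\<^esub> TT (inv\<^bsub>G\<^esub> z) = TT y"
      using TT_mult[of "inv\<^bsub>G\<^esub> x \<otimes>\<^bsub>G\<^esub> ?tau" "inv\<^bsub>G\<^esub> z"] i tc l l1 li by simp
    show ?thesis unfolding signed_gen_def T2[symmetric] T1[symmetric] using e TT_closed tc i
      by (simp add: A.m_assoc A.inv_cancel_left)
  qed
qed

lemma theta_word_alt_list:
  assumes rep: "induced_by ori Or" and g: "g \<in> carrier G" and s: "s \<in> S" and t: "t \<in> S"
  shows "theta_w ori g (alt_list s t k)
    = word_prod AA (map (\<lambda>i. sgen (Or (prj g \<otimes> alt_prod W s t i) (alt_letter s t i)) (n (alt_letter s t i))) [0..<k])"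
proof -
  let ?r = "alt_list s t k"
  have "ori (g \<otimes>\<^bsub>G\<^esub> lift (take i ?r)) (?r ! i) = Or (prj g \<otimes> alt_prod W s t i) (alt_letter s t i)"
    and "?r ! i = alt_letter s t i" if "i < k" for i
  proof -
    have "take i ?r \<in> lists S" "lift (take i ?r) \<in> carrier G"
      using alt_list_in_lists[OF s t] lift_closed that by (auto simp: take_alt_list)
    then show "ori (g \<otimes>\<^bsub>G\<^esub> lift (take i ?r)) (?r ! i) = Or (prj g \<otimes> alt_prod W s t i) (alt_letter s t i)"
      using rep g prj_lift that s t
      by (simp add: take_alt_list nth_alt_list word_prod_alt_list alt_letter_def)
    show "?r ! i = alt_letter s t i" using that by (simp add: nth_alt_list)
  qed
  then have "map (\<lambda>i. sgen (ori (g \<otimes>\<^bsub>G\<^esub> lift (take i ?r)) (?r ! i)) (n (?r ! i))) [0..<k]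
      = map (\<lambda>i. sgen (Or (prj g \<otimes> alt_prod W s t i) (alt_letter s t i)) (n (alt_letter s t i))) [0..<k]"
    by (intro map_cong) auto
  then show ?thesis unfolding theta_word_nth[OF alt_list_in_lists[OF s t] g] length_alt_list by (simp only:)
qed

lemma theta_word_relator:
  assumes rep: "induced_by ori Or" and Or: "W_orientation Or" and g: "g \<in> carrier G"
    and s: "s \<in> S" and t: "t \<in> S" and m: "cox_m W s t \<noteq> 0"
  shows "theta_w ori g (alt_list s t (2 * cox_m W s t)) = TT (lift (alt_list s t (2 * cox_m W s t)))"
proof -
  let ?m = "cox_m W s t" and ?r = "alt_list s t (2 * cox_m W s t)"
  let ?F = "\<lambda>e i. sgen e (n (alt_letter s t i))" and ?L = "\<lambda>a j. lift (map (alt_letter s t) [a..<a + j])"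
  obtain k e where k: "k \<le> ?m" and e: "e \<in> {1, -1}"
    and sign: "\<And>i. i < 2 * ?m \<Longrightarrow> Or (prj g \<otimes> alt_prod W s t i) (alt_letter s t i)
       = (if k \<le> i \<and> i < k + ?m then - e else e)"
    using W_orientation_relator_signs[OF Or P.hom_closed[OF g] s t m] by blast
  have cl: "map (alt_letter s t) xs \<in> lists S" for xs by (rule alt_letter_in_lists[OF s t])
  have lift_r: "lift ?r = ?L 0 k \<otimes>\<^bsub>G\<^esub> (?L k ?m \<otimes>\<^bsub>G\<^esub> ?L (k + ?m) (?m - k))"
    unfolding alt_list_eq_map_alt_letter upt_split_window[OF k] map_append[of "alt_letter s t"]
    by (simp only: lift_append cl append_in_lists_conv simp_thms)
  have "theta_w ori g ?r = word_prod AA (map (\<lambda>i. ?F (if k \<le> i \<and> i < k + ?m then - e else e) i) [0..<2 * ?m])"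
    unfolding theta_word_alt_list[OF rep g s t] using sign by (intro arg_cong[where f = "word_prod AA"] map_cong) auto
  also have "\<dots> = sgen e (?L 0 k) \<otimes>\<^bsub>AA\<^esub> (sgen (- e) (?L k ?m) \<otimes>\<^bsub>AA\<^esub> sgen e (?L (k + ?m) (?m - k)))"
    using A.word_prod_window[OF k, of ?F "- e" e] sgen_closed n_closed s t
    by (simp only: sgen_alt_block[OF s t m k] sgen_alt_block[OF s t m le_refl]
        sgen_alt_block[OF s t m diff_le_self]) (auto simp: alt_letter_def)
  also have "\<dots> = TT (?L 0 k \<otimes>\<^bsub>G\<^esub> (?L k ?m \<otimes>\<^bsub>G\<^esub> ?L (k + ?m) (?m - k)))"
  proof (rule sgen_relator[OF e])
    show "?L 0 k \<in> carrier G" "?L k ?m \<in> carrier G" "?L (k + ?m) (?m - k) \<in> carrier G"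
      by (rule lift_closed[OF cl])+
    show "len (?L 0 k) = k" "len (?L k ?m) = ?m" "len (?L (k + ?m) (?m - k)) = ?m - k"
      by (rule len_lift_alt[OF s t m k] len_lift_alt[OF s t m le_refl] len_lift_alt[OF s t m diff_le_self])+
    show "prj (?L 0 k \<otimes>\<^bsub>G\<^esub> (?L k ?m \<otimes>\<^bsub>G\<^esub> ?L (k + ?m) (?m - k))) = \<one>"
      unfolding lift_r[symmetric] using prj_lift[OF alt_list_in_lists[OF s t]] alt_prod_cox_m[OF s t]
      by (simp add: word_prod_alt_list)
  qed (use k in simp)
  finally show ?thesis unfolding lift_r .
qed

end


section \<open>Well-definedness of \<theta>\<close>

context pro_p_coxeter_sys
begin

lemma TT_mult_Omega:
  assumes "a \<in> carrier G" "b \<in> carrier G" "prj a \<in> Omega" "prj b \<in> Omega"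
  shows "TT a \<otimes>\<^bsub>AA\<^esub> TT b = TT (a \<otimes>\<^bsub>G\<^esub> b)"
proof -
  have "prj (a \<otimes>\<^bsub>G\<^esub> b) \<in> Omega" using assms subgroup.m_closed[OF Omega_subgroup] by simp
  then show ?thesis using assms TT_mult len_Omega by simp
qed

text \<open>On the relator itself \<theta> equals T of its lift, an element of T, which is then moved to the
  right past the rest of the word.\<close>
lemma theta_word_insert_relator:
  assumes rep: "induced_by ori Or" and Or: "W_orientation Or" and g: "g \<in> carrier G"
    and uv: "u \<in> lists S" "v \<in> lists S" and s: "s \<in> S" and t: "t \<in> S" and m: "cox_m W s t \<noteq> 0"
  shows "theta_w ori g (u @ alt_list s t (2 * cox_m W s t) @ v)
    = theta_w ori g (u @ v) \<otimes>\<^bsub>AA\<^esub> TT (inv\<^bsub>G\<^esub> (lift (u @ v)) \<otimes>\<^bsub>G\<^esub> lift (u @ alt_list s t (2 * cox_m W s t) @ v))"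
    (is "_ = _ \<otimes>\<^bsub>AA\<^esub> TT (_ \<otimes>\<^bsub>G\<^esub> lift (u @ ?r @ v))")
proof -
  have rS: "?r \<in> lists S" by (rule alt_list_in_lists[OF s t])
  have c: "lift u \<in> carrier G" "lift v \<in> carrier G" "lift ?r \<in> carrier G" using lift_closed uv rS by auto
  have gu: "g \<otimes>\<^bsub>G\<^esub> lift u \<in> carrier G" using g c by simp
  have pr: "prj (lift ?r) = \<one>"
    using prj_lift[OF rS] word_prod_relator[OF s t] by (simp add: concat_replicate_pair)
  have "theta_w ori g (u @ ?r @ v)
      = theta_w ori g u \<otimes>\<^bsub>AA\<^esub> (theta_w ori (g \<otimes>\<^bsub>G\<^esub> lift u) ?r \<otimes>\<^bsub>AA\<^esub> theta_w ori (g \<otimes>\<^bsub>G\<^esub> lift u \<otimes>\<^bsub>G\<^esub> lift ?r) v)"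
    using theta_word_append[OF uv(1) _ g, of "?r @ v"] theta_word_append[OF rS uv(2) gu] rS uv by simp
  also have "theta_w ori (g \<otimes>\<^bsub>G\<^esub> lift u \<otimes>\<^bsub>G\<^esub> lift ?r) v = theta_w ori (g \<otimes>\<^bsub>G\<^esub> lift u) v"
    by (rule theta_word_prj_cong[OF rep uv(2)]) (use gu c pr in auto)
  also have "theta_w ori (g \<otimes>\<^bsub>G\<^esub> lift u) ?r = TT (lift ?r)"
    by (rule theta_word_relator[OF rep Or gu s t m])
  also have "TT (lift ?r) \<otimes>\<^bsub>AA\<^esub> theta_w ori (g \<otimes>\<^bsub>G\<^esub> lift u) v
      = theta_w ori (g \<otimes>\<^bsub>G\<^esub> lift u) v \<otimes>\<^bsub>AA\<^esub> TT (inv\<^bsub>G\<^esub> (lift v) \<otimes>\<^bsub>G\<^esub> lift ?r \<otimes>\<^bsub>G\<^esub> lift v)"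
    by (rule theta_word_kernel[OF uv(2) c(3) pr])
  also have "theta_w ori g u \<otimes>\<^bsub>AA\<^esub> (theta_w ori (g \<otimes>\<^bsub>G\<^esub> lift u) v \<otimes>\<^bsub>AA\<^esub>
        TT (inv\<^bsub>G\<^esub> (lift v) \<otimes>\<^bsub>G\<^esub> lift ?r \<otimes>\<^bsub>G\<^esub> lift v))
     = theta_w ori g (u @ v) \<otimes>\<^bsub>AA\<^esub> TT (inv\<^bsub>G\<^esub> (lift v) \<otimes>\<^bsub>G\<^esub> lift ?r \<otimes>\<^bsub>G\<^esub> lift v)"
    using theta_word_append[OF uv g] theta_word_closed uv gu TT_closed c by (simp add: A.m_assoc)
  also have "inv\<^bsub>G\<^esub> (lift v) \<otimes>\<^bsub>G\<^esub> lift ?r \<otimes>\<^bsub>G\<^esub> lift v = inv\<^bsub>G\<^esub> (lift (u @ v)) \<otimes>\<^bsub>G\<^esub> lift (u @ ?r @ v)"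
    using lift_append[OF uv] lift_append[OF uv(1), of "?r @ v"] lift_append[OF rS uv(2)] rS uv c
    by (simp add: G.inv_mult_group G.m_assoc G.inv_cancel_left)
  finally show ?thesis .
qed

lemma theta_word_cox_equiv:
  assumes rep: "induced_by ori Or" and Or: "W_orientation Or"
  shows "cox_equiv W S xs ys \<Longrightarrow> g \<in> carrier G \<Longrightarrow>
    theta_w ori g xs = theta_w ori g ys \<otimes>\<^bsub>AA\<^esub> TT (inv\<^bsub>G\<^esub> (lift ys) \<otimes>\<^bsub>G\<^esub> lift xs)"
proof (induct arbitrary: g rule: cox_equiv.induct)
  case (cox_refl xs)
  then show ?case using lift_closed theta_word_closed by (simp add: TT_one)
next
  case (cox_sym xs ys)
  let ?a = "inv\<^bsub>G\<^esub> (lift xs) \<otimes>\<^bsub>G\<^esub> lift ys" and ?b = "inv\<^bsub>G\<^esub> (lift ys) \<otimes>\<^bsub>G\<^esub> lift xs"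
  have f: "xs \<in> lists S" "ys \<in> lists S" "word_prod W xs = word_prod W ys"
    using word_prod_eq_if_cox_equiv[OF cox_sym(1)] by auto
  have c: "lift xs \<in> carrier G" "lift ys \<in> carrier G" using lift_closed f by auto
  have ab: "?a \<in> carrier G" "?b \<in> carrier G" "prj ?a = \<one>" "prj ?b = \<one>"
    using c f prj_lift word_prod_closed[OF lists_S_carrier] by auto
  have "?b \<otimes>\<^bsub>G\<^esub> ?a = \<one>\<^bsub>G\<^esub>" using c by (simp add: G.m_assoc G.inv_cancel_left)
  then have ba: "TT ?b \<otimes>\<^bsub>AA\<^esub> TT ?a = \<one>\<^bsub>AA\<^esub>"
    using TT_mult_Omega[OF ab(2,1)] ab(3,4) one_Omega by (simp add: TT_one)
  have "theta_w ori g xs \<otimes>\<^bsub>AA\<^esub> TT ?a = theta_w ori g ys \<otimes>\<^bsub>AA\<^esub> (TT ?b \<otimes>\<^bsub>AA\<^esub> TT ?a)"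
    using cox_sym(2)[OF cox_sym(3)] theta_word_closed f TT_closed ab by (simp add: A.m_assoc)
  then show ?case using ba theta_word_closed f by simp
next
  case (cox_trans xs ys zs)
  let ?a = "inv\<^bsub>G\<^esub> (lift ys) \<otimes>\<^bsub>G\<^esub> lift xs" and ?b = "inv\<^bsub>G\<^esub> (lift zs) \<otimes>\<^bsub>G\<^esub> lift ys"
  have f: "xs \<in> lists S" "ys \<in> lists S" "zs \<in> lists S"
    "word_prod W xs = word_prod W ys" "word_prod W ys = word_prod W zs"
    using word_prod_eq_if_cox_equiv[OF cox_trans(1)] word_prod_eq_if_cox_equiv[OF cox_trans(3)] by auto
  have c: "lift xs \<in> carrier G" "lift ys \<in> carrier G" "lift zs \<in> carrier G" using lift_closed f by auto
  have ab: "?a \<in> carrier G" "?b \<in> carrier G" "prj ?a = \<one>" "prj ?b = \<one>"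
    using c f prj_lift word_prod_closed[OF lists_S_carrier] by auto
  have "theta_w ori g xs = (theta_w ori g zs \<otimes>\<^bsub>AA\<^esub> TT ?b) \<otimes>\<^bsub>AA\<^esub> TT ?a"
    using cox_trans(2,4)[OF cox_trans(5)] by simp
  also have "\<dots> = theta_w ori g zs \<otimes>\<^bsub>AA\<^esub> TT (?b \<otimes>\<^bsub>G\<^esub> ?a)"
    using TT_mult_Omega[OF ab(2,1)] ab one_Omega theta_word_closed f TT_closed by (simp add: A.m_assoc)
  also have "?b \<otimes>\<^bsub>G\<^esub> ?a = inv\<^bsub>G\<^esub> (lift zs) \<otimes>\<^bsub>G\<^esub> lift xs"
    using c by (simp add: G.m_assoc G.inv_cancel_left)
  finally show ?case .
next
  case (cox_rel u v s t)
  then show ?case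
    using theta_word_insert_relator[OF rep Or, of g u v s t] by (simp add: concat_replicate_pair)
qed

text \<open>Two decompositions n_{s_1} \<cdots> n_{s_k} v of the same element (prj v \<in> \<Omega>) give the
  same value: their words agree in W_aff, hence are Coxeter-equivalent.\<close>
lemma theta_word_decomp_eq:
  assumes rep: "induced_by ori Or" and Or: "W_orientation Or"
    and ws: "ws1 \<in> lists S" "ws2 \<in> lists S" and v: "v1 \<in> carrier G" "v2 \<in> carrier G"
    "prj v1 \<in> Omega" "prj v2 \<in> Omega"
    and eq: "lift ws1 \<otimes>\<^bsub>G\<^esub> v1 = lift ws2 \<otimes>\<^bsub>G\<^esub> v2" and g: "g \<in> carrier G"
  shows "theta_w ori g ws1 \<otimes>\<^bsub>AA\<^esub> TT v1 = theta_w ori g ws2 \<otimes>\<^bsub>AA\<^esub> TT v2"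
proof -
  have c: "lift ws1 \<in> carrier G" "lift ws2 \<in> carrier G" using lift_closed ws by auto
  have "word_prod W ws1 \<otimes> prj v1 = word_prod W ws2 \<otimes> prj v2"
    using arg_cong[OF eq, of prj] c v prj_lift ws by simp
  then have wp: "word_prod W ws1 = word_prod W ws2"
    using Waff_Omega_decomp_unique[OF word_prod_in_Waff[OF ws(1)] word_prod_in_Waff[OF ws(2)] v(3,4)] by simp
  let ?a = "inv\<^bsub>G\<^esub> (lift ws2) \<otimes>\<^bsub>G\<^esub> lift ws1"
  have a: "?a \<in> carrier G" "prj ?a \<in> Omega"
    using c prj_lift ws wp one_Omega word_prod_closed[OF lists_S_carrier] by auto
  have "?a \<otimes>\<^bsub>G\<^esub> v1 = v2" using eq c v by (simp add: G.m_assoc G.inv_cancel_left)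
  moreover have "theta_w ori g ws1 = theta_w ori g ws2 \<otimes>\<^bsub>AA\<^esub> TT ?a"
    using theta_word_cox_equiv[OF rep Or cox_equiv_if_word_prod_eq[OF ws wp] g] .
  ultimately show ?thesis
    using TT_mult_Omega[OF a(1) v(1) a(2) v(3)] theta_word_closed ws TT_closed a v
    by (simp add: A.m_assoc)
qed

end

section \<open>Construction of \<theta>\<close>

lemma pro_p_coxeter_sysI:
  assumes "pro_p_coxeter G W Waff S Omega prj n"
  shows "pro_p_coxeter_sys W Waff S Omega G prj n"
proof -
  have ext: "ext_coxeter W Waff S Omega" using assms unfolding pro_p_coxeter_def by blast
  then have cox: "coxeter_system W Waff S" unfolding ext_coxeter_def by blast
  then have "group W" unfolding coxeter_system_def by blast
  then show ?thesis
    using assms ext cox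
    by (intro pro_p_coxeter_sys.intro ext_coxeter_sys.intro coxeter_sys.intro
        pro_p_coxeter_sys_axioms.intro ext_coxeter_sys_axioms.intro coxeter_sys_axioms.intro)
qed

context pro_p_coxeter_sys
begin

abbreviation "Ors \<equiv> pro_orientations G W Waff S Omega prj"

lemma orientation_induced:
  assumes "ori \<in> Ors"
  obtains Or where "W_orientation Or" "induced_by ori Or"
proof -
  obtain Or where "orientation_ext W Waff S Omega Or"
    and "ori = (\<lambda>g s. if g \<in> carrier G \<and> s \<in> S then Or (prj g) s else undefined)"
    using assms unfolding pro_orientations_def by blast
  then show ?thesis using that[of Or] W_orientation_if_orientation_ext by simp
qed

lemma orient_act_closed:
  assumes ori: "ori \<in> Ors" and w: "w \<in> carrier G"
  shows "orient_act G S ori w \<in> Ors"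
proof -
  obtain Or where oe: "orientation_ext W Waff S Omega Or"
    and o: "ori = (\<lambda>g s. if g \<in> carrier G \<and> s \<in> S then Or (prj g) s else undefined)"
    using ori unfolding pro_orientations_def by blast
  let ?Or' = "\<lambda>x s. Or (prj w \<otimes> x) s"
  have oe': "orientation_ext W Waff S Omega ?Or'"
    by (rule orientation_ext_if_W_orientation, rule W_orientation_shift)
      (use W_orientation_if_orientation_ext[OF oe] w in auto)
  have "orient_act G S ori w = (\<lambda>g s. if g \<in> carrier G \<and> s \<in> S then ?Or' (prj g) s else undefined)"
    unfolding orient_act_def o using w by (intro ext) auto
  then show ?thesis unfolding pro_orientations_def by (intro CollectI exI[of _ ?Or'] conjI oe')
qed

definition is_decomp :: "'g \<Rightarrow> 'a list \<times> 'g \<Rightarrow> bool" where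
  "is_decomp g p \<longleftrightarrow> fst p \<in> lists S \<and> snd p \<in> carrier G \<and> prj (snd p) \<in> Omega \<and> g = lift (fst p) \<otimes>\<^bsub>G\<^esub> snd p"

lemma decomp_exists: "g \<in> carrier G \<Longrightarrow> \<exists>p. is_decomp g p"
proof -
  assume g: "g \<in> carrier G"
  obtain w u where wu: "w \<in> Waff" "u \<in> Omega" "prj g = w \<otimes> u" using Waff_Omega_decomp[of "prj g"] g by auto
  obtain ws where ws: "ws \<in> lists S" "w = word_prod W ws" using wu(1) Waff_eq by blast
  let ?v = "inv\<^bsub>G\<^esub> (lift ws) \<otimes>\<^bsub>G\<^esub> g"
  have c: "lift ws \<in> carrier G" "?v \<in> carrier G" using lift_closed[OF ws(1)] g by auto
  have "prj ?v = inv w \<otimes> (w \<otimes> u)" using c g wu(3) prj_lift[OF ws(1)] ws(2) by simp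
  then have "prj ?v = u" using Waff_carrier Omega_carrier wu by (simp add: inv_cancel_left)
  moreover have "g = lift ws \<otimes>\<^bsub>G\<^esub> ?v" using c g by (simp add: G.inv_cancel_left)
  ultimately show ?thesis unfolding is_decomp_def using ws c wu by (intro exI[of _ "(ws, ?v)"]) simp
qed

definition theta :: "'g \<Rightarrow> ('g \<Rightarrow> 'a \<Rightarrow> int) \<Rightarrow> ('g \<times> bool) list set" where
  "theta g ori = theta_w ori \<one>\<^bsub>G\<^esub> (fst (SOME p. is_decomp g p)) \<otimes>\<^bsub>AA\<^esub> TT (snd (SOME p. is_decomp g p))"

lemma theta_closed: "g \<in> carrier G \<Longrightarrow> theta g ori \<in> carrier AA"
  using someI_ex[OF decomp_exists] theta_word_closed TT_closed unfolding theta_def is_decomp_def by auto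

lemma theta_eq:
  assumes ori: "ori \<in> Ors" and d: "is_decomp g (ws, v)"
  shows "theta g ori = theta_w ori \<one>\<^bsub>G\<^esub> ws \<otimes>\<^bsub>AA\<^esub> TT v"
proof -
  obtain Or where "W_orientation Or" "induced_by ori Or" using orientation_induced[OF ori] .
  moreover have "is_decomp g (SOME p. is_decomp g p)" using d by (rule someI)
  ultimately show ?thesis
    unfolding theta_def using d unfolding is_decomp_def by (intro theta_word_decomp_eq) auto
qed

lemma theta_mult:
  assumes ori: "ori \<in> Ors" and w: "w \<in> carrier G" and w': "w' \<in> carrier G"
  shows "theta (w \<otimes>\<^bsub>G\<^esub> w') ori = theta w ori \<otimes>\<^bsub>AA\<^esub> theta w' (orient_act G S ori w)"
proof -
  obtain Or where Or: "W_orientation Or" and rep: "induced_by ori Or" using orientation_induced[OF ori] .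
  obtain ws v ws' v' where d: "is_decomp w (ws, v)" and d': "is_decomp w' (ws', v')"
    using decomp_exists[OF w] decomp_exists[OF w'] by (metis surj_pair)
  then have D: "ws \<in> lists S" "v \<in> carrier G" "prj v \<in> Omega" "w = lift ws \<otimes>\<^bsub>G\<^esub> v"
    and D': "ws' \<in> lists S" "v' \<in> carrier G" "prj v' \<in> Omega" "w' = lift ws' \<otimes>\<^bsub>G\<^esub> v'"
    unfolding is_decomp_def by auto
  let ?cws = "map (conjugate W (prj v)) ws'"
  have c: "lift ws \<in> carrier G" "lift ws' \<in> carrier G" using lift_closed D D' by auto
  obtain v'' where v'': "v'' \<in> carrier G" "prj v'' = prj v"
    "v \<otimes>\<^bsub>G\<^esub> lift ws' = lift ?cws \<otimes>\<^bsub>G\<^esub> v''"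
    "TT v \<otimes>\<^bsub>AA\<^esub> theta_w ori (lift ws \<otimes>\<^bsub>G\<^esub> v) ws' = theta_w ori (lift ws) ?cws \<otimes>\<^bsub>AA\<^esub> TT v''"
    using theta_word_Omega[OF rep Or D'(1) c(1) D(2,3)] by blast
  have cws: "?cws \<in> lists S" using D'(1) conjugate_S[OF D(3)] by auto
  have "w \<otimes>\<^bsub>G\<^esub> w' = lift ws \<otimes>\<^bsub>G\<^esub> (v \<otimes>\<^bsub>G\<^esub> lift ws') \<otimes>\<^bsub>G\<^esub> v'"
    using D D' c by (simp add: G.m_assoc)
  also have "\<dots> = lift (ws @ ?cws) \<otimes>\<^bsub>G\<^esub> (v'' \<otimes>\<^bsub>G\<^esub> v')"
    unfolding v''(3) lift_append[OF D(1) cws] using c lift_closed[OF cws] v'' D' by (simp add: G.m_assoc)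
  finally have dec: "is_decomp (w \<otimes>\<^bsub>G\<^esub> w') (ws @ ?cws, v'' \<otimes>\<^bsub>G\<^esub> v')"
    unfolding is_decomp_def using D D' cws v'' subgroup.m_closed[OF Omega_subgroup] by simp
  have "theta w' (orient_act G S ori w) = theta_w ori (lift ws \<otimes>\<^bsub>G\<^esub> v) ws' \<otimes>\<^bsub>AA\<^esub> TT v'"
    using theta_eq[OF orient_act_closed[OF ori w] d'] theta_word_orient_act[OF w D'(1)] D(4) w by simp
  then have "theta w ori \<otimes>\<^bsub>AA\<^esub> theta w' (orient_act G S ori w)
      = theta_w ori \<one>\<^bsub>G\<^esub> ws \<otimes>\<^bsub>AA\<^esub> (TT v \<otimes>\<^bsub>AA\<^esub> theta_w ori (lift ws \<otimes>\<^bsub>G\<^esub> v) ws') \<otimes>\<^bsub>AA\<^esub> TT v'"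
    using theta_eq[OF ori d] theta_word_closed D D' TT_closed c by (simp add: A.m_assoc)
  also have "\<dots> = (theta_w ori \<one>\<^bsub>G\<^esub> ws \<otimes>\<^bsub>AA\<^esub> theta_w ori (lift ws) ?cws) \<otimes>\<^bsub>AA\<^esub> (TT v'' \<otimes>\<^bsub>AA\<^esub> TT v')"
    unfolding v''(4) using theta_word_closed D cws c TT_closed v'' D' by (simp add: A.m_assoc)
  also have "\<dots> = theta_w ori \<one>\<^bsub>G\<^esub> (ws @ ?cws) \<otimes>\<^bsub>AA\<^esub> TT (v'' \<otimes>\<^bsub>G\<^esub> v')"
    using theta_word_append[OF D(1) cws, of "\<one>\<^bsub>G\<^esub>" ori] TT_mult_Omega[OF v''(1) D'(2)] v'' D D' c
    by simp
  also have "\<dots> = theta (w \<otimes>\<^bsub>G\<^esub> w') ori" using theta_eq[OF ori dec] by simp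
  finally show ?thesis by simp
qed

lemma theta_n:
  assumes ori: "ori \<in> Ors" and s: "s \<in> S"
  shows "theta (n s) ori = sgen (ori \<one>\<^bsub>G\<^esub> s) (n s)"
proof -
  have "is_decomp (n s) ([s], \<one>\<^bsub>G\<^esub>)" unfolding is_decomp_def using s n_closed one_Omega by (simp add: G.word_prod_Cons)
  then show ?thesis using theta_eq[OF ori] sgen_closed n_closed s by (simp add: TT_one)
qed

lemma theta_Omega:
  assumes ori: "ori \<in> Ors" and u: "u \<in> carrier G" "prj u \<in> Omega"
  shows "theta u ori = TT u"
proof -
  have "is_decomp u ([], u)" unfolding is_decomp_def using u by simp
  then show ?thesis using theta_eq[OF ori] TT_closed u by simp
qed

lemma theta_unique:
  assumes mult: "\<forall>w\<in>carrier G. \<forall>w'\<in>carrier G. \<forall>ori\<in>Ors.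
              th' (w \<otimes>\<^bsub>G\<^esub> w') ori = th' w ori \<otimes>\<^bsub>AA\<^esub> th' w' (orient_act G S ori w)"
    and gen: "\<forall>s\<in>S. \<forall>ori\<in>Ors. th' (n s) ori = sgen (ori \<one>\<^bsub>G\<^esub> s) (n s)"
    and Om: "\<forall>u\<in>carrier G. prj u \<in> Omega \<longrightarrow> (\<forall>ori\<in>Ors. th' u ori = TT u)"
    and w: "w \<in> carrier G" and ori: "ori \<in> Ors"
  shows "th' w ori = theta w ori"
proof -
  have "th' (lift ws \<otimes>\<^bsub>G\<^esub> v) ori = theta (lift ws \<otimes>\<^bsub>G\<^esub> v) ori"
    if "ws \<in> lists S" "v \<in> carrier G" "prj v \<in> Omega" "ori \<in> Ors" for ws v ori
    using that
  proof (induct ws arbitrary: ori)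
    case Nil
    then show ?case using Om theta_Omega by simp
  next
    case (Cons s ws)
    let ?h = "lift ws \<otimes>\<^bsub>G\<^esub> v"
    have s: "s \<in> S" "n s \<in> carrier G" and h: "?h \<in> carrier G"
      using Cons lift_closed n_closed by auto
    have "th' (n s \<otimes>\<^bsub>G\<^esub> ?h) ori = theta (n s) ori \<otimes>\<^bsub>AA\<^esub> theta ?h (orient_act G S ori (n s))"
      using mult gen theta_n Cons orient_act_closed s h by simp
    also have "\<dots> = theta (n s \<otimes>\<^bsub>G\<^esub> ?h) ori" using theta_mult[OF \<open>ori \<in> Ors\<close> s(2) h] by simp
    also have "n s \<otimes>\<^bsub>G\<^esub> ?h = lift (s # ws) \<otimes>\<^bsub>G\<^esub> v"
      using s lift_closed Cons by (simp add: G.word_prod_Cons G.m_assoc)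
    finally show ?case by simp
  qed
  then show ?thesis using decomp_exists[OF w] ori unfolding is_decomp_def by auto
qed

end

theorem theorem2p6p1:
  fixes G :: "('g, 'c) monoid_scheme" and W :: "('w, 'd) monoid_scheme"
    and Waff S Omega :: "'w set" and prj :: "'g \<Rightarrow> 'w" and n :: "'w \<Rightarrow> 'g"
  assumes "pro_p_coxeter G W Waff S Omega prj n"
  defines "Ors \<equiv> pro_orientations G W Waff S Omega prj"
    and "A \<equiv> A_group G (pro_length W S Omega prj)"
    and "T \<equiv> A_gen G (pro_length W S Omega prj)"
  shows "\<exists>\<theta> :: 'g \<Rightarrow> ('g \<Rightarrow> 'w \<Rightarrow> int) \<Rightarrow> ('g \<times> bool) list set.
           (\<forall>w\<in>carrier G. \<forall>ori\<in>Ors. \<theta> w ori \<in> carrier A) \<and>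
           (\<forall>w\<in>carrier G. \<forall>w'\<in>carrier G. \<forall>ori\<in>Ors.
              \<theta> (w \<otimes>\<^bsub>G\<^esub> w') ori = \<theta> w ori \<otimes>\<^bsub>A\<^esub> \<theta> w' (orient_act G S ori w)) \<and>
           (\<forall>s\<in>S. \<forall>ori\<in>Ors.
              \<theta> (n s) ori = (if ori \<one>\<^bsub>G\<^esub> s = 1 then T (n s) else inv\<^bsub>A\<^esub> (T (inv\<^bsub>G\<^esub> (n s))))) \<and>
           (\<forall>u\<in>carrier G. prj u \<in> Omega \<longrightarrow> (\<forall>ori\<in>Ors. \<theta> u ori = T u)) \<and>
           (\<forall>\<theta>' :: 'g \<Rightarrow> ('g \<Rightarrow> 'w \<Rightarrow> int) \<Rightarrow> ('g \<times> bool) list set.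
              ((\<forall>w\<in>carrier G. \<forall>ori\<in>Ors. \<theta>' w ori \<in> carrier A) \<and>
               (\<forall>w\<in>carrier G. \<forall>w'\<in>carrier G. \<forall>ori\<in>Ors.
                  \<theta>' (w \<otimes>\<^bsub>G\<^esub> w') ori = \<theta>' w ori \<otimes>\<^bsub>A\<^esub> \<theta>' w' (orient_act G S ori w)) \<and>
               (\<forall>s\<in>S. \<forall>ori\<in>Ors.
                  \<theta>' (n s) ori = (if ori \<one>\<^bsub>G\<^esub> s = 1 then T (n s) else inv\<^bsub>A\<^esub> (T (inv\<^bsub>G\<^esub> (n s))))) \<and>
               (\<forall>u\<in>carrier G. prj u \<in> Omega \<longrightarrow> (\<forall>ori\<in>Ors. \<theta>' u ori = T u)))
              \<longrightarrow> (\<forall>w\<in>carrier G. \<forall>ori\<in>Ors. \<theta>' w ori = \<theta> w ori))"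
proof -
  interpret pro_p_coxeter_sys W Waff S Omega G prj n
    by (rule pro_p_coxeter_sysI[OF assms(1)])
  have gen: "(if ori \<one>\<^bsub>G\<^esub> s = 1 then T (n s) else inv\<^bsub>A\<^esub> (T (inv\<^bsub>G\<^esub> (n s)))) = sgen (ori \<one>\<^bsub>G\<^esub> s) (n s)"
    for ori s
    by (simp add: A_def T_def signed_gen_def)
  show ?thesis
    unfolding gen unfolding A_def T_def
  proof (intro exI[of _ theta] conjI allI impI)
    show "\<forall>w\<in>carrier G. \<forall>ori\<in>Ors. theta w ori \<in> carrier AA"
      unfolding Ors_def using theta_closed by blast
    show "\<forall>w\<in>carrier G. \<forall>w'\<in>carrier G. \<forall>ori\<in>Ors.
      theta (w \<otimes>\<^bsub>G\<^esub> w') ori = theta w ori \<otimes>\<^bsub>AA\<^esub> theta w' (orient_act G S ori w)"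
      unfolding Ors_def using theta_mult by blast
    show "\<forall>s\<in>S. \<forall>ori\<in>Ors. theta (n s) ori = sgen (ori \<one>\<^bsub>G\<^esub> s) (n s)"
      unfolding Ors_def using theta_n by blast
    show "\<forall>u\<in>carrier G. prj u \<in> Omega \<longrightarrow> (\<forall>ori\<in>Ors. theta u ori = TT u)"
      unfolding Ors_def using theta_Omega by blast
  next
    fix th'
    assume "(\<forall>w\<in>carrier G. \<forall>ori\<in>Ors. th' w ori \<in> carrier AA) \<and>
      (\<forall>w\<in>carrier G. \<forall>w'\<in>carrier G. \<forall>ori\<in>Ors.
        th' (w \<otimes>\<^bsub>G\<^esub> w') ori = th' w ori \<otimes>\<^bsub>AA\<^esub> th' w' (orient_act G S ori w)) \<and>
      (\<forall>s\<in>S. \<forall>ori\<in>Ors. th' (n s) ori = sgen (ori \<one>\<^bsub>G\<^esub> s) (n s)) \<and>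
      (\<forall>u\<in>carrier G. prj u \<in> Omega \<longrightarrow> (\<forall>ori\<in>Ors. th' u ori = TT u))"
    then show "\<forall>w\<in>carrier G. \<forall>ori\<in>Ors. th' w ori = theta w ori"
      unfolding Ors_def using theta_unique[of th'] by blast
  qed
qed

end
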